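(* Let $M$ be a transitive monoid of binary relations on a finite nonempty set $Q$. Then the set $K$ of elements of $M$ of rank $r(M)$ is a regular $\mathcal D$-class of $M$. The groups $G_e$, for $e$ an idempotent in $K$, are equivalent transitive permutation groups. Moreover, for an idempotent $e\in K$ and a fixed point $i$ of $e$, $r(M)$ equals the index in $H(e)$ of the subgroup $\{m\in H(e)\mid (i,i)\in m\}$.
   Context: Monoid of relations: set of relations on $Q$ containing the identity and closed under composition $mn=\{(p,q)\mid\exists r,(p,r)\in m,(r,q)\in n\}$. It is transitive if for all $p,q\in Q$ some $m\in M$ has $(p,q)\in m$. The rank of a relation $m$ on $Q$ is the least cardinality of a set $R$ such that $m=uv$ with $u\subseteq Q\times R$, $v\subseteq R\times Q$ (Boolean rank). The minimal rank $r(M)$ is the minimum rank of the nonempty elements of $M$. A $\mathcal D$-class is regular if it contains an idempotent. For an idempotent $e$, $H(e)$ is its $\mathcal H$-class (a group, inverses $m^{-1}$), $\Gamma_e$ the set of strongly connected components of the restriction of $e$ to its fixed points $\{q\mid (q,q)\in e\}$, $\gamma_e(m)=\{(\rho,\sigma)\in\Gamma_e^2\mid (r,s)\in m,(s,r)\in m^{-1}\text{ for some }r\in\rho,s\in\sigma\}$ for $m\in H(e)$, and $G_e=\gamma_e(H(e))$, a permutation group on $\Gamma_e$. Permutation groups $G$ on $S$ and $G'$ on $S'$ are equivalent if there exist a bijection $\theta:S\to S'$ and an isomorphism $\alpha:G\to G'$ with $\theta(g(s))=\alpha(g)(\theta(s))$. *)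

theory Defs
  imports Main
begin

text \<open>Relations on Q are sets of pairs; the product mn of the paper is relcomp (m O n).\<close>

definition rel_monoid :: "'a set \<Rightarrow> ('a \<times> 'a) set set \<Rightarrow> bool" where
  "rel_monoid Q M \<longleftrightarrow> (\<forall>m\<in>M. m \<subseteq> Q \<times> Q) \<and> Id_on Q \<in> M \<and>
     (\<forall>m\<in>M. \<forall>n\<in>M. m O n \<in> M)"

definition transitive_rel_monoid :: "'a set \<Rightarrow> ('a \<times> 'a) set set \<Rightarrow> bool" where
  "transitive_rel_monoid Q M \<longleftrightarrow> (\<forall>p\<in>Q. \<forall>q\<in>Q. \<exists>m\<in>M. (p, q) \<in> m)"

text \<open>Boolean rank: least cardinality of R with m = u v, u \<subseteq> Q \<times> R, v \<subseteq> R \<times> Q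
  (R taken, w.l.o.g. up to bijection, as {..<n}).\<close>
definition rel_rank :: "'a set \<Rightarrow> ('a \<times> 'a) set \<Rightarrow> nat" where
  "rel_rank Q m = (LEAST n. \<exists>(u :: ('a \<times> nat) set) (v :: (nat \<times> 'a) set).
      u \<subseteq> Q \<times> {..<n} \<and> v \<subseteq> {..<n} \<times> Q \<and> m = u O v)"

definition min_rank :: "'a set \<Rightarrow> ('a \<times> 'a) set set \<Rightarrow> nat" where
  "min_rank Q M = Min {rel_rank Q m | m. m \<in> M \<and> m \<noteq> {}}"

definition greenR :: "('a \<times> 'a) set set \<Rightarrow> ('a \<times> 'a) set \<Rightarrow> ('a \<times> 'a) set \<Rightarrow> bool" where
  "greenR M m n \<longleftrightarrow> (\<exists>x\<in>M. m = n O x) \<and> (\<exists>y\<in>M. n = m O y)"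

definition greenL :: "('a \<times> 'a) set set \<Rightarrow> ('a \<times> 'a) set \<Rightarrow> ('a \<times> 'a) set \<Rightarrow> bool" where
  "greenL M m n \<longleftrightarrow> (\<exists>x\<in>M. m = x O n) \<and> (\<exists>y\<in>M. n = y O m)"

definition greenD :: "('a \<times> 'a) set set \<Rightarrow> ('a \<times> 'a) set \<Rightarrow> ('a \<times> 'a) set \<Rightarrow> bool" where
  "greenD M m n \<longleftrightarrow> (\<exists>k\<in>M. greenR M m k \<and> greenL M k n)"

definition Dclass :: "('a \<times> 'a) set set \<Rightarrow> ('a \<times> 'a) set \<Rightarrow> ('a \<times> 'a) set set" where
  "Dclass M m = {n \<in> M. greenD M m n}"

definition Hclass :: "('a \<times> 'a) set set \<Rightarrow> ('a \<times> 'a) set \<Rightarrow> ('a \<times> 'a) set set" where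
  "Hclass M e = {m \<in> M. greenR M m e \<and> greenL M m e}"

definition idempotent :: "('a \<times> 'a) set \<Rightarrow> bool" where
  "idempotent e \<longleftrightarrow> e O e = e"

definition hinv :: "('a \<times> 'a) set set \<Rightarrow> ('a \<times> 'a) set \<Rightarrow> ('a \<times> 'a) set \<Rightarrow> ('a \<times> 'a) set" where
  "hinv M e m = (THE n. n \<in> Hclass M e \<and> m O n = e \<and> n O m = e)"

definition fixpts :: "'a set \<Rightarrow> ('a \<times> 'a) set \<Rightarrow> 'a set" where
  "fixpts Q e = {q \<in> Q. (q, q) \<in> e}"

definition Gamma :: "'a set \<Rightarrow> ('a \<times> 'a) set \<Rightarrow> 'a set set" where
  "Gamma Q e = (let F = fixpts Q e; R = e \<inter> (F \<times> F) in
     F // {(p, q). (p, q) \<in> R\<^sup>* \<and> (q, p) \<in> R\<^sup>*})"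

definition gamma :: "'a set \<Rightarrow> ('a \<times> 'a) set set \<Rightarrow> ('a \<times> 'a) set \<Rightarrow> ('a \<times> 'a) set
    \<Rightarrow> ('a set \<times> 'a set) set" where
  "gamma Q M e m = {(\<rho>, \<sigma>). \<rho> \<in> Gamma Q e \<and> \<sigma> \<in> Gamma Q e \<and>
      (\<exists>r\<in>\<rho>. \<exists>s\<in>\<sigma>. (r, s) \<in> m \<and> (s, r) \<in> hinv M e m)}"

definition Ggrp :: "'a set \<Rightarrow> ('a \<times> 'a) set set \<Rightarrow> ('a \<times> 'a) set \<Rightarrow> ('a set \<times> 'a set) set set" where
  "Ggrp Q M e = gamma Q M e ` Hclass M e"

text \<open>Permutations of S represented by their graphs; a permutation group is a nonempty
  set of such graphs closed under composition and inverse.\<close>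
definition perm_rel :: "'b set \<Rightarrow> ('b \<times> 'b) set \<Rightarrow> bool" where
  "perm_rel S g \<longleftrightarrow> g \<subseteq> S \<times> S \<and> (\<forall>x\<in>S. \<exists>!y. (x, y) \<in> g) \<and> (\<forall>y\<in>S. \<exists>!x. (x, y) \<in> g)"

definition perm_group_rel :: "'b set \<Rightarrow> ('b \<times> 'b) set set \<Rightarrow> bool" where
  "perm_group_rel S G \<longleftrightarrow> G \<noteq> {} \<and> (\<forall>g\<in>G. perm_rel S g) \<and>
     (\<forall>g\<in>G. \<forall>h\<in>G. g O h \<in> G) \<and> (\<forall>g\<in>G. converse g \<in> G)"

definition transitive_perm_group :: "'b set \<Rightarrow> ('b \<times> 'b) set set \<Rightarrow> bool" where
  "transitive_perm_group S G \<longleftrightarrow> perm_group_rel S G \<and> (\<forall>s\<in>S. \<forall>t\<in>S. \<exists>g\<in>G. (s, t) \<in> g)"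

definition equivalent_perm_groups :: "'b set \<Rightarrow> ('b \<times> 'b) set set \<Rightarrow> 'c set \<Rightarrow> ('c \<times> 'c) set set \<Rightarrow> bool" where
  "equivalent_perm_groups S G S' G' \<longleftrightarrow>
     (\<exists>\<theta> \<alpha>. bij_betw \<theta> S S' \<and> bij_betw \<alpha> G G' \<and>
        (\<forall>g\<in>G. \<forall>h\<in>G. \<alpha> (g O h) = \<alpha> g O \<alpha> h) \<and>
        (\<forall>g\<in>G. \<forall>s\<in>S. \<forall>t\<in>S. (s, t) \<in> g \<longleftrightarrow> (\<theta> s, \<theta> t) \<in> \<alpha> g))"

definition grp_index :: "('a \<times> 'a) set set \<Rightarrow> ('a \<times> 'a) set set \<Rightarrow> nat" where
  "grp_index H S = card ((\<lambda>m. (\<lambda>s. s O m) ` S) ` H)"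

end

theory Submission
  imports Defs
begin

text \<open>
  For an idempotent relation e on a finite set every pair of e passes through a fixed point, so
  e factors through the set \<Gamma>_e of strongly connected components of its fixed points; conversely
  every factorization of e through a set Y injects \<Gamma>_e into Y. Hence rank e = |\<Gamma>_e|.

  Let m have minimal rank r and factor m = c l through a set S with |S| \<le> r. The sandwiches l x c
  (x \<in> M) form a finite monoid of relations on S. A nonempty idempotent sandwich expands to a
  nonempty element c A l of M factoring through \<Gamma>_A, so minimality forces |\<Gamma>_A| = |S|: A is
  reflexive and antisymmetric, and transitivity of M then makes it the identity. Hence every
  nonempty sandwich is invertible, i.e. m x m \<noteq> {} makes m x m invertible in m M m. This
  yields an idempotent of rank r, shows that K is a single D-class, and that H(e) is a group.

  Taking for c l the factorization of e through \<Gamma>_e, the map m \<mapsto> l m c is an action of H(e)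
  by permutations of \<Gamma>_e which coincides with \<gamma>_e and is transitive. The orbit map at the
  class of i identifies the right cosets of the stabiliser of i with \<Gamma>_e. Two idempotents of
  K are conjugate, e = x y and f = y x, and conjugation by x and y transports G_e onto G_f.
\<close>

lemma relpow_idempotent: "e O e = e \<Longrightarrow> 0 < n \<Longrightarrow> e ^^ n = e"
proof (induction n)
  case (Suc n)
  then show ?case by (cases n) auto
qed simp

lemma relpow_of_path:
  assumes path: "\<forall>i<n. (g i, g (Suc i)) \<in> r" and "a \<le> b" and "b \<le> n"
  shows "(g a, g b) \<in> r ^^ (b - a)"
  using assms(2,3)
proof (induction b)
  case (Suc b)
  show ?case
  proof (cases "a = Suc b")
    case False
    then have "a \<le> b" using Suc.prems by simp
    then have "(g a, g (Suc b)) \<in> r ^^ Suc (b - a)"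
      using Suc path by (auto intro: relpow_Suc_I)
    then show ?thesis using \<open>a \<le> b\<close> by (simp add: Suc_diff_le)
  qed simp
qed simp

text \<open>Pigeonhole on a path of length card X + 1 inside e = e ^^ (card X + 1).\<close>
lemma idempotent_factors_through_fixpoint:
  assumes fin: "finite X" and sub: "e \<subseteq> X \<times> X" and idem: "e O e = e" and pq: "(p, q) \<in> e"
  shows "\<exists>f. (f, f) \<in> e \<and> (p, f) \<in> e \<and> (f, q) \<in> e"
proof -
  define n where "n = Suc (card X)"
  have pow: "\<And>k. 0 < k \<Longrightarrow> e ^^ k = e" using relpow_idempotent[OF idem] .
  have "(p, q) \<in> e ^^ n" using pow[of n] pq unfolding n_def by (metis zero_less_Suc)
  then obtain g where g0: "g 0 = p" and gn: "g n = q" and path: "\<forall>i<n. (g i, g (Suc i)) \<in> e"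
    by (auto simp: relpow_fun_conv)
  have "g i \<in> X" if "i \<le> card X" for i
  proof -
    have "(g i, g (Suc i)) \<in> e" using path that unfolding n_def by simp
    then show ?thesis using sub by blast
  qed
  then have "g ` {0..card X} \<subseteq> X" by auto
  then have "\<not> inj_on g {0..card X}"
  proof (intro notI)
    assume "inj_on g {0..card X}"
    then have "card (g ` {0..card X}) = Suc (card X)" by (simp add: card_image)
    then show False using card_mono[OF fin \<open>g ` {0..card X} \<subseteq> X\<close>] by simp
  qed
  then obtain a b where ab: "a < b" "b \<le> card X" "g a = g b"
    unfolding inj_on_def by (metis atLeastAtMost_iff linorder_neqE_nat)
  have seg: "(g a', g b') \<in> e" if "a' < b'" "b' \<le> n" for a' b'
    using relpow_of_path[OF path, of a' b'] pow[of "b' - a'"] that by simp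
  have "(g a, g a) \<in> e" using seg[of a b] ab n_def by simp
  moreover have "(p, g a) \<in> e" using seg[of 0 a] g0 \<open>(g a, g a) \<in> e\<close> ab n_def
    by (cases "a = 0") auto
  moreover have "(g a, q) \<in> e" using seg[of a n] gn ab n_def by simp
  ultimately show ?thesis by blast
qed

definition scc_of :: "('b \<times> 'b) set \<Rightarrow> 'b \<Rightarrow> 'b set" where
  "scc_of A p = {q. (q, q) \<in> A \<and> (p, q) \<in> A \<and> (q, p) \<in> A}"

lemma scc_of_self: "(p, p) \<in> A \<Longrightarrow> p \<in> scc_of A p"
  unfolding scc_of_def by auto

lemma scc_of_eqI:
  "A O A \<subseteq> A \<Longrightarrow> (p, p) \<in> A \<Longrightarrow> (q, q) \<in> A \<Longrightarrow> (p, q) \<in> A \<Longrightarrow> (q, p) \<in> A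
   \<Longrightarrow> scc_of A q = scc_of A p"
  unfolding scc_of_def by blast

definition scc_left :: "'b set \<Rightarrow> ('b \<times> 'b) set \<Rightarrow> ('b \<times> 'b set) set" where
  "scc_left X A = {(p, \<rho>). \<rho> \<in> Gamma X A \<and> (\<exists>f\<in>\<rho>. (p, f) \<in> A)}"

definition scc_right :: "'b set \<Rightarrow> ('b \<times> 'b) set \<Rightarrow> ('b set \<times> 'b) set" where
  "scc_right X A = {(\<rho>, q). \<rho> \<in> Gamma X A \<and> (\<exists>f\<in>\<rho>. (f, q) \<in> A)}"

lemma scc_left_subset: "A \<subseteq> X \<times> X \<Longrightarrow> scc_left X A \<subseteq> X \<times> Gamma X A"
  unfolding scc_left_def by auto

lemma scc_right_subset: "A \<subseteq> X \<times> X \<Longrightarrow> scc_right X A \<subseteq> Gamma X A \<times> X"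
  unfolding scc_right_def by auto

lemma rtrancl_restrict_transitive_iff:
  assumes tr: "A O A \<subseteq> A" and p: "p \<in> F"
  shows "(p, q) \<in> (A \<inter> F \<times> F)\<^sup>* \<longleftrightarrow> p = q \<or> ((p, q) \<in> A \<and> q \<in> F)"
proof
  assume "(p, q) \<in> (A \<inter> F \<times> F)\<^sup>*"
  then show "p = q \<or> ((p, q) \<in> A \<and> q \<in> F)"
  proof (induction rule: rtrancl_induct)
    case (step y z)
    then show ?case using tr by blast
  qed simp
next
  assume "p = q \<or> ((p, q) \<in> A \<and> q \<in> F)"
  then show "(p, q) \<in> (A \<inter> F \<times> F)\<^sup>*" using p by blast
qed

context
  fixes X :: "'b set" and A :: "('b \<times> 'b) set"
  assumes sub: "A \<subseteq> X \<times> X" and tr: "A O A \<subseteq> A"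
begin

lemma Gamma_eq_scc_of: "Gamma X A = scc_of A ` fixpts X A"
proof -
  let ?F = "fixpts X A"
  let ?E = "{(p, q). (p, q) \<in> (A \<inter> ?F \<times> ?F)\<^sup>* \<and> (q, p) \<in> (A \<inter> ?F \<times> ?F)\<^sup>*}"
  have "?E `` {p} = scc_of A p" if p: "p \<in> ?F" for p
  proof -
    have "?E `` {p} = {q. (p = q \<or> ((p, q) \<in> A \<and> q \<in> ?F)) \<and> (q = p \<or> ((q, p) \<in> A \<and> p \<in> ?F))}"
      using rtrancl_restrict_transitive_iff[OF tr p] rtrancl_restrict_transitive_iff[OF tr] by auto
    also have "\<dots> = scc_of A p" using p sub unfolding scc_of_def fixpts_def by auto
    finally show ?thesis .
  qed
  then have "?F // ?E = scc_of A ` ?F" unfolding quotient_def by auto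
  then show ?thesis unfolding Gamma_def Let_def by simp
qed

lemma scc_of_in_Gamma: "(p, p) \<in> A \<Longrightarrow> scc_of A p \<in> Gamma X A"
  using sub unfolding Gamma_eq_scc_of fixpts_def by auto

lemma Gamma_finite: "finite X \<Longrightarrow> finite (Gamma X A)"
  unfolding Gamma_eq_scc_of fixpts_def by simp

context
  fixes \<rho> assumes \<rho>: "\<rho> \<in> Gamma X A"
begin

lemma Gamma_memE:
  obtains p where "(p, p) \<in> A" and "\<rho> = scc_of A p"
  using \<rho> unfolding Gamma_eq_scc_of fixpts_def by auto

lemma Gamma_nonempty: "\<rho> \<noteq> {}"
proof -
  obtain p where "(p, p) \<in> A" "\<rho> = scc_of A p" by (rule Gamma_memE)
  then have "p \<in> \<rho>" by (simp add: scc_of_self)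
  then show ?thesis by blast
qed

lemma Gamma_related:
  assumes "f \<in> \<rho>" and "g \<in> \<rho>"
  shows "(f, g) \<in> A"
proof -
  obtain p where "\<rho> = scc_of A p" by (rule Gamma_memE)
  then have "(f, p) \<in> A" "(p, g) \<in> A" using assms unfolding scc_of_def by auto
  then show ?thesis using tr by blast
qed

lemma Gamma_fixpoint: "f \<in> \<rho> \<Longrightarrow> (f, f) \<in> A"
  using Gamma_related .

lemma scc_of_Gamma_member:
  assumes "f \<in> \<rho>"
  shows "scc_of A f = \<rho>"
proof -
  obtain p where "(p, p) \<in> A" "\<rho> = scc_of A p" by (rule Gamma_memE)
  then show ?thesis using assms tr unfolding scc_of_def by blast
qed

end

lemma card_Gamma_le_fixpts: "finite X \<Longrightarrow> card (Gamma X A) \<le> card (fixpts X A)"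
  unfolding Gamma_eq_scc_of fixpts_def by (simp add: card_image_le)

lemma card_Gamma_less_fixpts:
  assumes fin: "finite X" and "p \<noteq> q" and pq: "(p, q) \<in> A" and qp: "(q, p) \<in> A"
  shows "card (Gamma X A) < card (fixpts X A)"
proof -
  have refl_pq: "(p, p) \<in> A" "(q, q) \<in> A" using pq qp tr by blast+
  then have F: "p \<in> fixpts X A" "q \<in> fixpts X A" using sub unfolding fixpts_def by auto
  have finF: "finite (fixpts X A)" using fin unfolding fixpts_def by simp
  have "scc_of A q \<in> scc_of A ` (fixpts X A - {q})"
    using scc_of_eqI[OF tr refl_pq pq qp] F \<open>p \<noteq> q\<close> by auto
  then have "scc_of A ` fixpts X A = scc_of A ` (fixpts X A - {q})" by blast
  then have "card (Gamma X A) \<le> card (fixpts X A - {q})"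
    unfolding Gamma_eq_scc_of using finF by (simp add: card_image_le)
  also have "\<dots> < card (fixpts X A)" using finF F(2) by (rule card_Diff1_less)
  finally show ?thesis .
qed

lemma card_Gamma_ge_imp_refl_antisym:
  assumes fin: "finite X" and card: "card X \<le> card (Gamma X A)"
  shows "Id_on X \<subseteq> A" and "antisym A"
proof -
  have F: "fixpts X A \<subseteq> X" unfolding fixpts_def by auto
  have le: "card X \<le> card (fixpts X A)" using card card_Gamma_le_fixpts[OF fin] by simp
  then have "fixpts X A = X" using F fin by (metis card_seteq)
  then show "Id_on X \<subseteq> A" unfolding fixpts_def by auto
  have "card (fixpts X A) \<le> card X" using F fin by (rule card_mono[rotated])
  then have "\<not> card (Gamma X A) < card (fixpts X A)" using card le by simp
  then show "antisym A" using card_Gamma_less_fixpts[OF fin] by (auto intro: antisymI)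
qed

lemma scc_left_iff:
  assumes \<rho>: "\<rho> \<in> Gamma X A" and f: "f \<in> \<rho>"
  shows "(p, \<rho>) \<in> scc_left X A \<longleftrightarrow> (p, f) \<in> A"
proof
  assume "(p, \<rho>) \<in> scc_left X A"
  then obtain g where "g \<in> \<rho>" "(p, g) \<in> A" unfolding scc_left_def by blast
  moreover have "(g, f) \<in> A" using Gamma_related[OF \<rho> \<open>g \<in> \<rho>\<close> f] .
  ultimately show "(p, f) \<in> A" using tr by blast
qed (use \<rho> f in \<open>auto simp: scc_left_def\<close>)

lemma scc_right_iff:
  assumes \<rho>: "\<rho> \<in> Gamma X A" and f: "f \<in> \<rho>"
  shows "(\<rho>, q) \<in> scc_right X A \<longleftrightarrow> (f, q) \<in> A"
proof
  assume "(\<rho>, q) \<in> scc_right X A"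
  then obtain g where "g \<in> \<rho>" "(g, q) \<in> A" unfolding scc_right_def by blast
  moreover have "(f, g) \<in> A" using Gamma_related[OF \<rho> f \<open>g \<in> \<rho>\<close>] .
  ultimately show "(f, q) \<in> A" using tr by blast
qed (use \<rho> f in \<open>auto simp: scc_right_def\<close>)

text \<open>Choose in each class a fixed point f and a middle point y with (f, y) \<in> u and
  (y, f) \<in> v; two fixed points sharing a middle point are mutually related, so the choice
  is injective.\<close>
lemma card_Gamma_le_factorization:
  assumes eq: "A = u O v" and u: "u \<subseteq> X \<times> Y" and finY: "finite Y"
  shows "card (Gamma X A) \<le> card Y"
proof -
  define rep where "rep \<rho> = (SOME f. f \<in> \<rho>)" for \<rho> :: "'b set"
  have rep: "rep \<rho> \<in> \<rho>" if "\<rho> \<in> Gamma X A" for \<rho>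
    using Gamma_nonempty[OF that] unfolding rep_def by (simp add: some_in_eq)
  define h where "h \<rho> = (SOME y. (rep \<rho>, y) \<in> u \<and> (y, rep \<rho>) \<in> v)" for \<rho>
  have h: "(rep \<rho>, h \<rho>) \<in> u \<and> (h \<rho>, rep \<rho>) \<in> v" if "\<rho> \<in> Gamma X A" for \<rho>
  proof -
    have "(rep \<rho>, rep \<rho>) \<in> u O v" using Gamma_fixpoint[OF that rep[OF that]] eq by simp
    then have "\<exists>y. (rep \<rho>, y) \<in> u \<and> (y, rep \<rho>) \<in> v" by blast
    then show ?thesis unfolding h_def by (rule someI_ex)
  qed
  have "inj_on h (Gamma X A)"
  proof (rule inj_onI)
    fix \<rho> \<sigma> assume \<rho>: "\<rho> \<in> Gamma X A" and \<sigma>: "\<sigma> \<in> Gamma X A" and "h \<rho> = h \<sigma>"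
    then have "(rep \<rho>, h \<rho>) \<in> u" "(h \<rho>, rep \<sigma>) \<in> v" "(rep \<sigma>, h \<rho>) \<in> u" "(h \<rho>, rep \<rho>) \<in> v"
      using h[OF \<rho>] h[OF \<sigma>] by simp_all
    then have "(rep \<rho>, rep \<sigma>) \<in> A" "(rep \<sigma>, rep \<rho>) \<in> A" unfolding eq by blast+
    then have "scc_of A (rep \<sigma>) = scc_of A (rep \<rho>)"
      using scc_of_eqI[OF tr] Gamma_fixpoint[OF \<rho> rep[OF \<rho>]]
        Gamma_fixpoint[OF \<sigma> rep[OF \<sigma>]] by blast
    then show "\<rho> = \<sigma>"
      by (simp only: scc_of_Gamma_member[OF \<rho> rep[OF \<rho>]]
          scc_of_Gamma_member[OF \<sigma> rep[OF \<sigma>]])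
  qed
  moreover have "h ` Gamma X A \<subseteq> Y" using h u by fast
  ultimately show ?thesis using card_inj_on_le finY by blast
qed

end

lemma idempotent_eq_scc_left_O_scc_right:
  assumes fin: "finite X" and sub: "A \<subseteq> X \<times> X" and idem: "A O A = A"
  shows "A = scc_left X A O scc_right X A"
proof
  have tr: "A O A \<subseteq> A" using idem by simp
  show "A \<subseteq> scc_left X A O scc_right X A"
  proof
    fix x assume "x \<in> A"
    then obtain p q where x: "x = (p, q)" "(p, q) \<in> A" by (cases x) auto
    then obtain f where f: "(f, f) \<in> A" "(p, f) \<in> A" "(f, q) \<in> A"
      using idempotent_factors_through_fixpoint[OF fin sub idem] by blast
    have "scc_of A f \<in> Gamma X A" "f \<in> scc_of A f"
      using scc_of_in_Gamma[OF sub tr f(1)] scc_of_self[OF f(1)] .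
    then show "x \<in> scc_left X A O scc_right X A"
      using f x unfolding scc_left_def scc_right_def by blast
  qed
  show "scc_left X A O scc_right X A \<subseteq> A"
  proof
    fix z assume "z \<in> scc_left X A O scc_right X A"
    then obtain p q \<rho> f g where z: "z = (p, q)" "\<rho> \<in> Gamma X A" "f \<in> \<rho>" "g \<in> \<rho>"
        "(p, f) \<in> A" "(g, q) \<in> A"
      unfolding scc_left_def scc_right_def by blast
    moreover have "(f, g) \<in> A" using Gamma_related[OF sub tr z(2-4)] .
    ultimately show "z \<in> A" using tr by blast
  qed
qed

lemma relcomp_reindex_nat:
  assumes fin: "finite S" and u: "u \<subseteq> Q \<times> S" and v: "v \<subseteq> S \<times> Q"
  shows "\<exists>(u' :: ('a \<times> nat) set) (v' :: (nat \<times> 'a) set).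
    u' \<subseteq> Q \<times> {..<card S} \<and> v' \<subseteq> {..<card S} \<times> Q \<and> u O v = u' O v'"
proof -
  obtain h where h: "bij_betw h S {..<card S}"
    using ex_bij_betw_finite_nat[OF fin] unfolding atLeast0LessThan by blast
  define u' where "u' = (\<lambda>(p, s). (p, h s)) ` u"
  define v' where "v' = (\<lambda>(s, q). (h s, q)) ` v"
  have "h s \<in> {..<card S}" if "s \<in> S" for s using bij_betw_apply[OF h that] .
  then have "u' \<subseteq> Q \<times> {..<card S}" "v' \<subseteq> {..<card S} \<times> Q"
    using u v unfolding u'_def v'_def by auto
  moreover have "u O v = u' O v'"
  proof
    show "u O v \<subseteq> u' O v'" unfolding u'_def v'_def by force
    show "u' O v' \<subseteq> u O v"
    proof
      fix x assume "x \<in> u' O v'"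
      then obtain p s s' q where x: "x = (p, q)" "(p, s) \<in> u" "(s', q) \<in> v" "h s = h s'"
        unfolding u'_def v'_def by auto
      then have "s = s'" using u v bij_betw_imp_inj_on[OF h] by (auto dest: inj_onD)
      then show "x \<in> u O v" using x by auto
    qed
  qed
  ultimately show ?thesis by blast
qed

lemma rel_rank_le_card:
  assumes "finite S" "u \<subseteq> Q \<times> S" "v \<subseteq> S \<times> Q" "m = u O v"
  shows "rel_rank Q m \<le> card S"
  unfolding rel_rank_def using relcomp_reindex_nat[OF assms(1-3)] assms(4) by (auto intro: Least_le)

lemma rel_rank_factorization:
  assumes fin: "finite Q" and m: "m \<subseteq> Q \<times> Q"
  obtains u :: "('a \<times> nat) set" and v :: "(nat \<times> 'a) set"
  where "u \<subseteq> Q \<times> {..<rel_rank Q m}" "v \<subseteq> {..<rel_rank Q m} \<times> Q" "m = u O v"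
proof -
  have "m = m O Id_on Q" using m by auto
  then have "\<exists>n (u :: ('a \<times> nat) set) (v :: (nat \<times> 'a) set).
      u \<subseteq> Q \<times> {..<n} \<and> v \<subseteq> {..<n} \<times> Q \<and> m = u O v"
    using relcomp_reindex_nat[OF fin m, of "Id_on Q"] by auto
  from LeastI_ex[OF this] show ?thesis using that unfolding rel_rank_def by blast
qed

lemma rel_rank_empty: "rel_rank Q {} = 0"
  unfolding rel_rank_def by (rule Least_eq_0) auto

lemma rel_rank_pos:
  assumes "finite Q" "m \<subseteq> Q \<times> Q" "m \<noteq> {}"
  shows "0 < rel_rank Q m"
proof -
  obtain u v where "u \<subseteq> Q \<times> {..<rel_rank Q m}" "m = u O v"
    using rel_rank_factorization[OF assms(1,2)] by metis
  then show ?thesis using assms(3) by (cases "rel_rank Q m") auto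
qed

lemma rel_rank_relcomp_le_left:
  assumes "finite Q" "m \<subseteq> Q \<times> Q" "n \<subseteq> Q \<times> Q"
  shows "rel_rank Q (m O n) \<le> rel_rank Q m"
proof -
  obtain u v where uv: "u \<subseteq> Q \<times> {..<rel_rank Q m}" "v \<subseteq> {..<rel_rank Q m} \<times> Q" "m = u O v"
    using rel_rank_factorization[OF assms(1,2)] .
  have "v O n \<subseteq> {..<rel_rank Q m} \<times> Q" using uv(2) assms(3) by auto
  then show ?thesis using rel_rank_le_card[of "{..<rel_rank Q m}" u Q "v O n"] uv by (simp add: O_assoc)
qed

lemma rel_rank_relcomp_le_right:
  assumes "finite Q" "m \<subseteq> Q \<times> Q" "n \<subseteq> Q \<times> Q"
  shows "rel_rank Q (m O n) \<le> rel_rank Q n"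
proof -
  obtain u v where uv: "u \<subseteq> Q \<times> {..<rel_rank Q n}" "v \<subseteq> {..<rel_rank Q n} \<times> Q" "n = u O v"
    using rel_rank_factorization[OF assms(1,3)] .
  have "m O u \<subseteq> Q \<times> {..<rel_rank Q n}" using uv(1) assms(2) by auto
  then show ?thesis using rel_rank_le_card[of "{..<rel_rank Q n}" "m O u" Q v] uv by (simp add: O_assoc)
qed

lemma rel_rank_idempotent:
  assumes fin: "finite Q" and sub: "e \<subseteq> Q \<times> Q" and idem: "e O e = e"
  shows "rel_rank Q e = card (Gamma Q e)"
proof (rule antisym)
  have tr: "e O e \<subseteq> e" using idem by simp
  show "rel_rank Q e \<le> card (Gamma Q e)"
    using rel_rank_le_card[OF Gamma_finite[OF sub tr fin] scc_left_subset[OF sub]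
        scc_right_subset[OF sub] idempotent_eq_scc_left_O_scc_right[OF fin sub idem]] .
  obtain u v where "u \<subseteq> Q \<times> {..<rel_rank Q e}" "e = u O v"
    using rel_rank_factorization[OF fin sub] by metis
  from card_Gamma_le_factorization[OF sub tr this(2,1)]
  show "card (Gamma Q e) \<le> rel_rank Q e" by simp
qed

lemma relpow_Suc_closed:
  assumes cl: "\<And>A B. A \<in> N \<Longrightarrow> B \<in> N \<Longrightarrow> A O B \<in> N" and A: "A \<in> N"
  shows "A ^^ Suc k \<in> N"
  by (induction k) (use A cl in simp_all)

lemma relpow_Suc_of_loop: "(x, x) \<in> r \<Longrightarrow> (x, y) \<in> r \<Longrightarrow> (x, y) \<in> r ^^ Suc n"
proof (induction n arbitrary: y)
  case (Suc n)
  have "(x, x) \<in> r ^^ Suc n" using Suc.IH Suc.prems(1) by blast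
  then show ?case using Suc.prems(2) by (rule relpow_Suc_I)
qed simp

lemma relpow_idempotent_power:
  assumes fin: "finite N" and cl: "\<And>A B. A \<in> N \<Longrightarrow> B \<in> N \<Longrightarrow> A O B \<in> N" and A: "A \<in> N"
  shows "\<exists>j>0. A ^^ j \<in> N \<and> A ^^ j O A ^^ j = A ^^ j"
proof -
  have "range (\<lambda>k. A ^^ Suc k) \<subseteq> N" using relpow_Suc_closed[OF cl A] by auto
  then have "finite (range (\<lambda>k. A ^^ Suc k))" using fin by (rule finite_subset)
  then have "\<not> inj (\<lambda>k. A ^^ Suc k)" using finite_imageD by auto
  then obtain a b where ab: "a < b" "A ^^ Suc a = A ^^ Suc b"
    unfolding inj_def by (metis linorder_neqE_nat)
  define s where "s = Suc a"
  define p where "p = b - a"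
  have p0: "0 < p" using ab p_def by simp
  have sp: "A ^^ (s + p) = A ^^ s" using ab unfolding s_def p_def by simp
  have period: "A ^^ (t + p) = A ^^ t" if "s \<le> t" for t
  proof -
    have "A ^^ (t + p) = A ^^ ((s + p) + (t - s))" using that by (simp add: algebra_simps)
    also have "\<dots> = A ^^ (s + p) O A ^^ (t - s)" by (rule relpow_add)
    also have "\<dots> = A ^^ (s + (t - s))" unfolding sp by (rule relpow_add[symmetric])
    finally show ?thesis using that by simp
  qed
  have periods: "A ^^ (t + q * p) = A ^^ t" if "s \<le> t" for t q
  proof (induction q)
    case (Suc q)
    have "A ^^ (t + Suc q * p) = A ^^ ((t + q * p) + p)" by (simp add: algebra_simps)
    also have "\<dots> = A ^^ (t + q * p)" using period that by simp
    finally show ?case using Suc.IH by simp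
  qed simp
  define j where "j = s * p"
  have "0 < j" using p0 unfolding j_def s_def by simp
  have "s \<le> j" using p0 unfolding j_def by simp
  have "A ^^ j O A ^^ j = A ^^ (j + s * p)" by (simp add: relpow_add j_def)
  also have "\<dots> = A ^^ j" using periods[OF \<open>s \<le> j\<close>] .
  finally have "A ^^ j O A ^^ j = A ^^ j" .
  moreover have "A ^^ j \<in> N" using relpow_Suc_closed[OF cl A, of "j - 1"] \<open>0 < j\<close> by simp
  ultimately show ?thesis using \<open>0 < j\<close> by blast
qed

context
  fixes A :: "('b \<times> 'c) set" and B and S T
  assumes A: "A \<subseteq> S \<times> T" and B: "B \<subseteq> T \<times> S"
    and AB: "A O B = Id_on S" and BA: "B O A = Id_on T"
begin

lemma inverse_pair_eq_converse: "B = converse A"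
proof
  show "B \<subseteq> converse A"
  proof
    fix z assume "z \<in> B"
    then obtain b a where ba: "z = (b, a)" "(b, a) \<in> B" "b \<in> T" using B by auto
    then obtain a' where a': "(b, a') \<in> B" "(a', b) \<in> A" using BA by blast
    then have "(a', a) \<in> A O B" using ba by blast
    then show "z \<in> converse A" using a' ba AB by auto
  qed
  show "converse A \<subseteq> B"
  proof
    fix z assume "z \<in> converse A"
    then obtain b a where ba: "z = (b, a)" "(a, b) \<in> A" "a \<in> S" using A by auto
    then obtain b' where b': "(a, b') \<in> A" "(b', a) \<in> B" using AB by blast
    then have "(b', b) \<in> B O A" using ba by blast
    then show "z \<in> B" using b' ba BA by auto
  qed
qed

lemma inverse_pair_functional:
  assumes "s \<in> S"
  shows "\<exists>!t. (s, t) \<in> A"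
proof -
  have "(s, s) \<in> A O B" using AB Id_onI[OF assms] by simp
  then obtain t where t: "(s, t) \<in> A" by blast
  moreover have "t' = t" if "(s, t') \<in> A" for t'
  proof -
    have "(t', t) \<in> B O A" using that t inverse_pair_eq_converse by blast
    then show ?thesis using BA by auto
  qed
  ultimately show ?thesis by blast
qed

lemma inverse_pair_bij_betw: "bij_betw (\<lambda>s. THE t. (s, t) \<in> A) S T"
proof (rule bij_betw_imageI)
  let ?\<theta> = "\<lambda>s. THE t. (s, t) \<in> A"
  have graph: "(s, ?\<theta> s) \<in> A" if "s \<in> S" for s
    using theI'[OF inverse_pair_functional[OF that]] .
  show "inj_on ?\<theta> S"
  proof (rule inj_onI)
    fix x y assume "x \<in> S" "y \<in> S" "?\<theta> x = ?\<theta> y"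
    then have "(x, y) \<in> A O B" using graph[of x] graph[of y] inverse_pair_eq_converse by auto
    then show "x = y" using AB by auto
  qed
  show "?\<theta> ` S = T"
  proof
    show "?\<theta> ` S \<subseteq> T" using graph A by blast
    show "T \<subseteq> ?\<theta> ` S"
    proof
      fix t assume "t \<in> T"
      then have "(t, t) \<in> B O A" using BA Id_onI by simp
      then obtain s where "(s, t) \<in> A" by blast
      moreover have "s \<in> S" using \<open>(s, t) \<in> A\<close> A by blast
      ultimately show "t \<in> ?\<theta> ` S"
        using inverse_pair_functional by (blast intro: the1_equality[symmetric])
    qed
  qed
qed

lemma inverse_pair_graph_iff:
  assumes "s \<in> S"
  shows "(s, t) \<in> A \<longleftrightarrow> t = (THE t. (s, t) \<in> A)"
  using the1_equality[OF inverse_pair_functional[OF assms]]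
    theI'[OF inverse_pair_functional[OF assms]] by blast

end

lemma inverse_pair_perm_rel:
  assumes "A \<subseteq> S \<times> S" "B \<subseteq> S \<times> S" "A O B = Id_on S" "B O A = Id_on S"
  shows "perm_rel S A"
proof -
  have "\<forall>y\<in>S. \<exists>!x. (x, y) \<in> A"
    using inverse_pair_functional[OF assms(2,1,4,3)]
    unfolding inverse_pair_eq_converse[OF assms] by simp
  moreover have "\<forall>x\<in>S. \<exists>!y. (x, y) \<in> A" using inverse_pair_functional[OF assms] by simp
  ultimately show ?thesis unfolding perm_rel_def using assms(1) by simp
qed

lemma card_image_eq_of_same_kernel:
  assumes fin: "finite A" and ker: "\<And>x y. x \<in> A \<Longrightarrow> y \<in> A \<Longrightarrow> f x = f y \<longleftrightarrow> g x = g y"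
  shows "card (f ` A) = card (g ` A)"
proof -
  let ?h = "\<lambda>z. g (inv_into A f z)"
  have "bij_betw ?h (f ` A) (g ` A)"
  proof (rule bij_betw_imageI)
    show "inj_on ?h (f ` A)"
    proof (rule inj_onI)
      fix z w assume zw: "z \<in> f ` A" "w \<in> f ` A" "?h z = ?h w"
      then have "f (inv_into A f z) = f (inv_into A f w)"
        using ker[of "inv_into A f z" "inv_into A f w"] by (simp add: inv_into_into)
      then show "z = w" using zw(1,2) by (simp add: f_inv_into_f)
    qed
    show "?h ` f ` A = g ` A"
    proof (rule set_eqI, rule iffI)
      fix w assume "w \<in> ?h ` f ` A"
      then show "w \<in> g ` A" by (auto intro: inv_into_into)
    next
      fix w assume "w \<in> g ` A"
      then obtain x where x: "x \<in> A" "w = g x" by blast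
      have "f (inv_into A f (f x)) = f x" using x by (simp add: f_inv_into_f)
      then have "?h (f x) = g x" using ker x by (simp add: inv_into_into)
      then show "w \<in> ?h ` f ` A" using x by (metis imageI)
    qed
  qed
  then show ?thesis by (rule bij_betw_same_card)
qed

definition scc_action :: "'a set \<Rightarrow> ('a \<times> 'a) set \<Rightarrow> ('a \<times> 'a) set \<Rightarrow> ('a set \<times> 'a set) set" where
  "scc_action Q e m = scc_right Q e O m O scc_left Q e"

definition sandwiches :: "('a \<times> 'a) set set \<Rightarrow> ('a \<times> 'b) set \<Rightarrow> ('b \<times> 'a) set \<Rightarrow> ('b \<times> 'b) set set"
  where "sandwiches M c l = {l O x O c | x. x \<in> M}"

locale finite_transitive_rel_monoid =
  fixes Q :: "'a set" and M :: "('a \<times> 'a) set set"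
  assumes finite_Q: "finite Q" and Q_nonempty: "Q \<noteq> {}" and rel_monoid: "rel_monoid Q M"
    and transitive: "transitive_rel_monoid Q M"
begin

definition min_rank_elems :: "('a \<times> 'a) set set" where
  "min_rank_elems = {m \<in> M. rel_rank Q m = min_rank Q M}"

lemma M_subset: "m \<in> M \<Longrightarrow> m \<subseteq> Q \<times> Q"
  using rel_monoid unfolding rel_monoid_def by blast

lemma Id_on_in_M: "Id_on Q \<in> M"
  using rel_monoid unfolding rel_monoid_def by blast

lemma relcomp_in_M: "m \<in> M \<Longrightarrow> n \<in> M \<Longrightarrow> m O n \<in> M"
  using rel_monoid unfolding rel_monoid_def by blast

lemma transitiveE:
  assumes "p \<in> Q" "q \<in> Q"
  obtains x where "x \<in> M" "(p, q) \<in> x"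
  using transitive assms unfolding transitive_rel_monoid_def by blast

lemma finite_M: "finite M"
  using finite_Q M_subset by (blast intro: finite_subset[of M "Pow (Q \<times> Q)"])

lemma min_rank_le: "m \<in> M \<Longrightarrow> m \<noteq> {} \<Longrightarrow> min_rank Q M \<le> rel_rank Q m"
  unfolding min_rank_def using finite_M by (intro Min_le) auto

lemma min_rank_attained: "\<exists>m\<in>M. m \<noteq> {} \<and> rel_rank Q m = min_rank Q M"
proof -
  have "min_rank Q M \<in> {rel_rank Q m |m. m \<in> M \<and> m \<noteq> {}}"
    unfolding min_rank_def using finite_M Id_on_in_M Q_nonempty by (intro Min_in) auto
  then show ?thesis by auto
qed

lemma min_rank_pos: "0 < min_rank Q M"
  using min_rank_attained rel_rank_pos[OF finite_Q] M_subset by metis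

lemma min_rank_elems_in_M: "m \<in> min_rank_elems \<Longrightarrow> m \<in> M"
  unfolding min_rank_elems_def by auto

lemma min_rank_elems_rank: "m \<in> min_rank_elems \<Longrightarrow> rel_rank Q m = min_rank Q M"
  unfolding min_rank_elems_def by auto

lemma min_rank_elems_nonempty: "m \<in> min_rank_elems \<Longrightarrow> m \<noteq> {}"
  using min_rank_pos rel_rank_empty[of Q] unfolding min_rank_elems_def by auto

lemma min_rank_elemsI: "m \<in> M \<Longrightarrow> m \<noteq> {} \<Longrightarrow> rel_rank Q m \<le> min_rank Q M \<Longrightarrow> m \<in> min_rank_elems"
  using min_rank_le unfolding min_rank_elems_def by (auto intro: antisym)

lemma rel_rank_relcomp_le_left_M: "m \<in> M \<Longrightarrow> n \<in> M \<Longrightarrow> rel_rank Q (m O n) \<le> rel_rank Q m"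
  using rel_rank_relcomp_le_left[OF finite_Q] M_subset by blast

lemma rel_rank_relcomp_le_right_M: "m \<in> M \<Longrightarrow> n \<in> M \<Longrightarrow> rel_rank Q (m O n) \<le> rel_rank Q n"
  using rel_rank_relcomp_le_right[OF finite_Q] M_subset by blast

context
  fixes m :: "('a \<times> 'a) set" and S :: "'b set" and c l
  assumes m: "m \<in> min_rank_elems" and finite_S: "finite S" and card_S: "card S \<le> min_rank Q M"
    and c: "c \<subseteq> Q \<times> S" and l: "l \<subseteq> S \<times> Q" and m_eq: "m = c O l"
begin

lemma factorization_point_used:
  assumes "\<sigma> \<in> S"
  shows "\<exists>p q. (p, \<sigma>) \<in> c \<and> (\<sigma>, q) \<in> l"
proof (rule ccontr)
  assume unused: "\<nexists>p q. (p, \<sigma>) \<in> c \<and> (\<sigma>, q) \<in> l"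
  have "m = (c \<inter> Q \<times> (S - {\<sigma>})) O (l \<inter> (S - {\<sigma>}) \<times> Q)" using unused m_eq c l by blast
  then have "rel_rank Q m \<le> card (S - {\<sigma>})" using finite_S by (intro rel_rank_le_card) auto
  also have "\<dots> < card S" using finite_S assms by (rule card_Diff1_less)
  finally show False using card_S min_rank_elems_rank[OF m] by simp
qed

lemma sandwich_subset:
  assumes "A \<in> sandwiches M c l"
  shows "A \<subseteq> S \<times> S"
proof -
  obtain x where "A = l O x O c" using assms unfolding sandwiches_def by blast
  then show ?thesis using c l by auto
qed

lemma sandwich_relcomp:
  assumes "A \<in> sandwiches M c l" "B \<in> sandwiches M c l"
  shows "A O B \<in> sandwiches M c l"
proof -
  obtain x y where xy: "x \<in> M" "y \<in> M" "A = l O x O c" "B = l O y O c"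
    using assms unfolding sandwiches_def by blast
  then have "A O B = l O (x O m O y) O c" using m_eq by (simp add: O_assoc)
  moreover have "x O m O y \<in> M" using xy m min_rank_elems_in_M relcomp_in_M by blast
  ultimately show ?thesis unfolding sandwiches_def by blast
qed

lemma finite_sandwiches: "finite (sandwiches M c l)"
proof (rule finite_subset)
  show "sandwiches M c l \<subseteq> Pow (S \<times> S)" using sandwich_subset by blast
qed (simp add: finite_S)

lemma sandwich_expand_in_M:
  assumes "A \<in> sandwiches M c l"
  shows "c O A O l \<in> M"
proof -
  obtain x where "x \<in> M" "A = l O x O c" using assms unfolding sandwiches_def by blast
  moreover have "c O (l O x O c) O l = m O x O m" using m_eq by (simp add: O_assoc)
  ultimately show ?thesis using m min_rank_elems_in_M relcomp_in_M by simp
qed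

lemma sandwich_expand_nonempty:
  assumes "A \<subseteq> S \<times> S" and "A \<noteq> {}"
  shows "c O A O l \<noteq> {}"
proof -
  obtain \<rho> \<sigma> where \<rho>\<sigma>: "(\<rho>, \<sigma>) \<in> A" using assms(2) by auto
  then have "\<rho> \<in> S" "\<sigma> \<in> S" using assms(1) by auto
  then obtain p q where "(p, \<rho>) \<in> c" "(\<sigma>, q) \<in> l" using factorization_point_used by blast
  then have "(p, q) \<in> c O A O l" using \<rho>\<sigma> by blast
  then show ?thesis by blast
qed

lemma sandwich_transitive:
  assumes "\<rho> \<in> S" "\<sigma> \<in> S"
  shows "\<exists>B\<in>sandwiches M c l. (\<rho>, \<sigma>) \<in> B"
proof -
  obtain q where q: "(\<rho>, q) \<in> l" using factorization_point_used[OF assms(1)] by blast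
  obtain p where p: "(p, \<sigma>) \<in> c" using factorization_point_used[OF assms(2)] by blast
  have "q \<in> Q" using q l by blast
  have "p \<in> Q" using p c by blast
  with \<open>q \<in> Q\<close> obtain x where "x \<in> M" "(q, p) \<in> x" by (rule transitiveE)
  then have "(\<rho>, \<sigma>) \<in> l O x O c" "l O x O c \<in> sandwiches M c l"
    using p q unfolding sandwiches_def by blast+
  then show ?thesis by (rule bexI)
qed

lemma sandwich_idempotent_refl_antisym:
  assumes A: "A \<in> sandwiches M c l" and idem: "A O A = A" and ne: "A \<noteq> {}"
  shows "Id_on S \<subseteq> A" and "antisym A"
proof -
  have sub: "A \<subseteq> S \<times> S" using sandwich_subset[OF A] .
  have tr: "A O A \<subseteq> A" using idem by simp
  have "c O A O l = (c O scc_left S A) O (scc_right S A O l)"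
    using idempotent_eq_scc_left_O_scc_right[OF finite_S sub idem] by (metis O_assoc)
  moreover have "c O scc_left S A \<subseteq> Q \<times> Gamma S A" using scc_left_subset[OF sub] c by blast
  moreover have "scc_right S A O l \<subseteq> Gamma S A \<times> Q" using scc_right_subset[OF sub] l by blast
  ultimately have "rel_rank Q (c O A O l) \<le> card (Gamma S A)"
    using Gamma_finite[OF sub tr finite_S] by (intro rel_rank_le_card) auto
  moreover have "min_rank Q M \<le> rel_rank Q (c O A O l)"
    using min_rank_le sandwich_expand_in_M[OF A] sandwich_expand_nonempty[OF sub ne] by blast
  ultimately have "card S \<le> card (Gamma S A)" using card_S by simp
  then show "Id_on S \<subseteq> A" "antisym A"
    using card_Gamma_ge_imp_refl_antisym[OF sub tr finite_S] by blast+
qed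

lemma sandwich_idempotent_eq_Id:
  assumes A: "A \<in> sandwiches M c l" and idem: "A O A = A" and ne: "A \<noteq> {}"
  shows "A = Id_on S"
proof
  show "Id_on S \<subseteq> A" using sandwich_idempotent_refl_antisym[OF assms] by simp
  show "A \<subseteq> Id_on S"
  proof
    fix z assume z: "z \<in> A"
    then obtain \<rho> \<sigma> where \<rho>\<sigma>: "z = (\<rho>, \<sigma>)" "\<rho> \<in> S" "\<sigma> \<in> S" using sandwich_subset[OF A] by auto
    obtain B where B: "B \<in> sandwiches M c l" "(\<sigma>, \<rho>) \<in> B" using sandwich_transitive \<rho>\<sigma> by blast
    define Z where "Z = A O B O A"
    have Z: "Z \<in> sandwiches M c l" unfolding Z_def using A B sandwich_relcomp by blast
    have "(\<rho>, \<rho>) \<in> A" "(\<sigma>, \<sigma>) \<in> A" using sandwich_idempotent_refl_antisym[OF assms] \<rho>\<sigma> by auto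
    then have "(\<rho>, \<rho>) \<in> Z" "(\<rho>, \<sigma>) \<in> Z" "(\<sigma>, \<sigma>) \<in> Z" "(\<sigma>, \<rho>) \<in> Z"
      unfolding Z_def using z \<rho>\<sigma> B by blast+
    then have pow: "(\<rho>, \<sigma>) \<in> Z ^^ Suc k \<and> (\<sigma>, \<rho>) \<in> Z ^^ Suc k" for k
      using relpow_Suc_of_loop by metis
    obtain j where j: "0 < j" "Z ^^ j \<in> sandwiches M c l" "Z ^^ j O Z ^^ j = Z ^^ j"
      using relpow_idempotent_power[OF finite_sandwiches sandwich_relcomp Z] by blast
    then have "(\<rho>, \<sigma>) \<in> Z ^^ j" "(\<sigma>, \<rho>) \<in> Z ^^ j" using pow by (metis gr0_implies_Suc)+
    then have "\<rho> = \<sigma>" using sandwich_idempotent_refl_antisym(2)[OF j(2,3)] by (auto dest: antisymD)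
    then show "z \<in> Id_on S" using \<rho>\<sigma> by (simp add: Id_onI)
  qed
qed

lemma sandwich_right_inverse:
  assumes A: "A \<in> sandwiches M c l" and ne: "A \<noteq> {}"
  shows "\<exists>B\<in>sandwiches M c l. A O B = Id_on S"
proof -
  obtain \<rho> \<sigma> where \<rho>\<sigma>: "(\<rho>, \<sigma>) \<in> A" "\<rho> \<in> S" "\<sigma> \<in> S" using ne sandwich_subset[OF A] by auto
  obtain B where B: "B \<in> sandwiches M c l" "(\<sigma>, \<rho>) \<in> B" using sandwich_transitive \<rho>\<sigma> by blast
  define C where "C = A O B"
  have C: "C \<in> sandwiches M c l" unfolding C_def using A B sandwich_relcomp by blast
  have "(\<rho>, \<rho>) \<in> C" unfolding C_def using \<rho>\<sigma> B by blast
  then have C_pow: "(\<rho>, \<rho>) \<in> C ^^ Suc k" for k using relpow_Suc_of_loop by metis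
  obtain j where j: "0 < j" "C ^^ j \<in> sandwiches M c l" "C ^^ j O C ^^ j = C ^^ j"
    using relpow_idempotent_power[OF finite_sandwiches
        sandwich_relcomp C] by blast
  then obtain k where k: "j = Suc k" using gr0_implies_Suc by blast
  have Cj: "C ^^ j = Id_on S" using sandwich_idempotent_eq_Id[OF j(2,3)] C_pow k by blast
  have "C ^^ (j + k) \<in> sandwiches M c l"
    using relpow_Suc_closed[OF sandwich_relcomp C, of "k + k"] k by simp
  then have "B O C ^^ (j + k) \<in> sandwiches M c l" using B sandwich_relcomp by blast
  moreover have "A O (B O C ^^ (j + k)) = Id_on S"
  proof -
    have "A O (B O C ^^ (j + k)) = C O C ^^ (j + k)" unfolding C_def by (simp add: O_assoc)
    also have "\<dots> = C ^^ Suc (j + k)" by (simp add: relpow_commute)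
    also have "\<dots> = C ^^ (j + j)" using k by simp
    also have "\<dots> = Id_on S" using j(3) Cj by (simp add: relpow_add)
    finally show ?thesis .
  qed
  ultimately show ?thesis by blast
qed

lemma sandwich_inverse:
  assumes A: "A \<in> sandwiches M c l" and ne: "A \<noteq> {}"
  shows "\<exists>B\<in>sandwiches M c l. A O B = Id_on S \<and> B O A = Id_on S"
proof -
  obtain B where B: "B \<in> sandwiches M c l" "A O B = Id_on S" using sandwich_right_inverse[OF A ne] by blast
  have "S \<noteq> {}" using ne sandwich_subset[OF A] by auto
  then have "B \<noteq> {}" using B(2) by auto
  then obtain B' where B': "B' \<in> sandwiches M c l" "B O B' = Id_on S"
    using sandwich_right_inverse[OF B(1)] by blast
  have "A = A O Id_on S" using sandwich_subset[OF A] by auto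
  also have "\<dots> = (A O B) O B'" using B' by (simp add: O_assoc)
  also have "\<dots> = B'" using B(2) sandwich_subset[OF B'(1)] by auto
  finally show ?thesis using B B' by blast
qed

lemma min_rank_sandwich_inverse_factored:
  assumes x: "x \<in> M" and ne: "m O x O m \<noteq> {}"
  shows "\<exists>y\<in>M. m O x O m O y O m = m \<and> m O y O m O x O m = m"
proof -
  have sw: "l O x O c \<in> sandwiches M c l" using x unfolding sandwiches_def by blast
  have "m O x O m = c O (l O x O c) O l" using m_eq by (simp add: O_assoc)
  then have "l O x O c \<noteq> {}" using ne by auto
  from sandwich_inverse[OF sw this] obtain B where B: "B \<in> sandwiches M c l"
      "(l O x O c) O B = Id_on S" "B O (l O x O c) = Id_on S"
    by blast
  then obtain y where y: "y \<in> M" "B = l O y O c" unfolding sandwiches_def by blast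
  have l_Id: "Id_on S O l = l" using l by auto
  have "m O x O m O y O m = c O ((l O x O c) O B) O l" using m_eq y by (simp add: O_assoc)
  also have "\<dots> = m" using B(2) l_Id m_eq by simp
  finally have "m O x O m O y O m = m" .
  moreover have "m O y O m O x O m = c O (B O (l O x O c)) O l" using m_eq y by (simp add: O_assoc)
  then have "m O y O m O x O m = m" using B(3) l_Id m_eq by simp
  ultimately show ?thesis using y by blast
qed

end

lemma min_rank_sandwich_inverse:
  assumes m: "m \<in> min_rank_elems" and x: "x \<in> M" and ne: "m O x O m \<noteq> {}"
  shows "\<exists>y\<in>M. m O x O m O y O m = m \<and> m O y O m O x O m = m"
proof -
  obtain u v where uv: "u \<subseteq> Q \<times> {..<rel_rank Q m}" "v \<subseteq> {..<rel_rank Q m} \<times> Q" "m = u O v"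
    using rel_rank_factorization[OF finite_Q M_subset[OF min_rank_elems_in_M[OF m]]] .
  have "card {..<rel_rank Q m} \<le> min_rank Q M" using min_rank_elems_rank[OF m] by simp
  from min_rank_sandwich_inverse_factored[OF m finite_lessThan this uv x ne] show ?thesis .
qed

lemma min_rank_idempotent_ex: "\<exists>e\<in>min_rank_elems. e O e = e"
proof -
  obtain m where m: "m \<in> M" "m \<noteq> {}" "rel_rank Q m = min_rank Q M" using min_rank_attained by blast
  then have mK: "m \<in> min_rank_elems" unfolding min_rank_elems_def by simp
  obtain p q where pq: "(p, q) \<in> m" using m(2) by auto
  then obtain x where x: "x \<in> M" "(q, p) \<in> x" using M_subset[OF m(1)] by (blast elim: transitiveE)
  have "m O x O m \<noteq> {}" using pq x by blast
  then obtain y where y: "y \<in> M" "m O x O m O y O m = m"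
    using min_rank_sandwich_inverse[OF mK x(1)] by blast
  define e where "e = m O x O m O y"
  have "e O e = (m O x O m O y O m) O x O m O y" unfolding e_def by (simp add: O_assoc)
  then have "e O e = e" using y(2) unfolding e_def by (simp add: O_assoc)
  moreover have "e O m = m" using y(2) unfolding e_def by (simp add: O_assoc)
  then have "e \<noteq> {}" using m(2) by auto
  moreover have "e \<in> M" unfolding e_def using m x y relcomp_in_M by simp
  moreover have "rel_rank Q e \<le> min_rank Q M"
    unfolding e_def using rel_rank_relcomp_le_left_M[OF m(1), of "x O m O y"] m x y relcomp_in_M
    by simp
  ultimately show ?thesis using min_rank_elemsI by blast
qed

lemma min_rank_greenR:
  assumes m: "m \<in> min_rank_elems" and uv: "u \<in> M" "v \<in> M" and ne: "m O (u O v) O m \<noteq> {}"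
  shows "greenR M m (m O u)"
proof -
  obtain y where y: "y \<in> M" "m O (u O v) O m O y O m = m"
    using min_rank_sandwich_inverse[OF m _ ne] uv relcomp_in_M by blast
  have "m = (m O u) O (v O m O y O m)" using y(2) by (simp add: O_assoc)
  moreover have "v O m O y O m \<in> M" using uv y m min_rank_elems_in_M relcomp_in_M by simp
  ultimately have "\<exists>x\<in>M. m = (m O u) O x" by (rule bexI)
  moreover have "\<exists>x\<in>M. m O u = m O x" using uv(1) by (intro bexI[of _ u]) simp_all
  ultimately show ?thesis unfolding greenR_def by (rule conjI)
qed

lemma min_rank_greenL:
  assumes m: "m \<in> min_rank_elems" and uv: "u \<in> M" "v \<in> M" and ne: "m O (u O v) O m \<noteq> {}"
  shows "greenL M (v O m) m"
proof -
  obtain y where y: "y \<in> M" "m O y O m O (u O v) O m = m"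
    using min_rank_sandwich_inverse[OF m _ ne] uv relcomp_in_M by blast
  have "m = (m O y O m O u) O (v O m)" using y(2) by (simp add: O_assoc)
  moreover have "m O y O m O u \<in> M" using uv y m min_rank_elems_in_M relcomp_in_M by simp
  ultimately have "\<exists>x\<in>M. m = x O (v O m)" by (rule bexI)
  moreover have "\<exists>x\<in>M. v O m = x O m" using uv(2) by (intro bexI[of _ v]) simp_all
  ultimately show ?thesis unfolding greenL_def by blast
qed

lemma min_rank_elems_subset_Dclass:
  assumes e: "e \<in> min_rank_elems" and n: "n \<in> min_rank_elems"
  shows "n \<in> Dclass M e"
proof -
  have eM: "e \<in> M" and nM: "n \<in> M" using e n min_rank_elems_in_M by auto
  obtain p q where pq: "(p, q) \<in> e" using min_rank_elems_nonempty[OF e] by auto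
  obtain p' q' where pq': "(p', q') \<in> n" using min_rank_elems_nonempty[OF n] by auto
  have "p \<in> Q" "q \<in> Q" using pq M_subset[OF eM] by auto
  moreover have "p' \<in> Q" "q' \<in> Q" using pq' M_subset[OF nM] by auto
  ultimately obtain a b where a: "a \<in> M" "(q, p') \<in> a" and b: "b \<in> M" "(q', p) \<in> b"
    by (meson transitiveE)
  have "(p, q) \<in> e O ((a O n) O b) O e"
    using relcompI[OF pq relcompI[OF relcompI[OF relcompI[OF a(2) pq'] b(2)] pq]] .
  then have "greenR M e (e O a O n)"
    using min_rank_greenR[OF e _ b(1)] a(1) nM relcomp_in_M by blast
  moreover have "(p', q') \<in> n O (b O (e O a)) O n"
    using relcompI[OF pq' relcompI[OF relcompI[OF b(2) relcompI[OF pq a(2)]] pq']] .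
  then have "greenL M ((e O a) O n) n"
    using min_rank_greenL[OF n b(1)] a(1) eM relcomp_in_M by blast
  then have "greenL M (e O a O n) n" by (simp add: O_assoc)
  moreover have "e O a O n \<in> M" using eM a nM relcomp_in_M by simp
  ultimately show ?thesis unfolding Dclass_def greenD_def using nM by blast
qed

lemma Dclass_subset_min_rank_elems:
  assumes e: "e \<in> min_rank_elems" and "n \<in> Dclass M e"
  shows "n \<in> min_rank_elems"
proof -
  obtain k x y x' y' where n: "n \<in> M" "k \<in> M" "x \<in> M" "y \<in> M" "x' \<in> M" "y' \<in> M"
    "e = k O x" "k = e O y" "k = x' O n" "n = y' O k"
    using assms(2) unfolding Dclass_def greenD_def greenR_def greenL_def by blast
  have "rel_rank Q n \<le> rel_rank Q k" using rel_rank_relcomp_le_right_M[OF n(6,2)] n(10) by simp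
  also have "\<dots> \<le> rel_rank Q e"
    using rel_rank_relcomp_le_left_M[OF min_rank_elems_in_M[OF e] n(4)] n(8) by simp
  also have "\<dots> = min_rank Q M" using min_rank_elems_rank[OF e] .
  finally have "rel_rank Q n \<le> min_rank Q M" .
  moreover have "n \<noteq> {}" using min_rank_elems_nonempty[OF e] n(7,9) by auto
  ultimately show ?thesis using min_rank_elemsI n(1) by blast
qed

lemma min_rank_elems_eq_Dclass:
  assumes "e \<in> min_rank_elems"
  shows "min_rank_elems = Dclass M e"
proof
  show "min_rank_elems \<subseteq> Dclass M e" using min_rank_elems_subset_Dclass[OF assms] by (rule subsetI)
  show "Dclass M e \<subseteq> min_rank_elems" using Dclass_subset_min_rank_elems[OF assms] by (rule subsetI)
qed

context
  fixes e assumes e: "e \<in> min_rank_elems" and idem: "e O e = e"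
begin

lemma idem_in_M: "e \<in> M" using e min_rank_elems_in_M by simp

lemma idem_subset: "e \<subseteq> Q \<times> Q" using M_subset idem_in_M by simp

lemma idem_trans: "e O e \<subseteq> e" using idem by simp

lemma idem_factorization: "e = scc_left Q e O scc_right Q e"
  using idempotent_eq_scc_left_O_scc_right[OF finite_Q idem_subset idem] .

lemma idem_fixpoint_ex: "\<exists>h. (h, h) \<in> e"
  using min_rank_elems_nonempty[OF e] idempotent_factors_through_fixpoint[OF finite_Q idem_subset idem]
  by fast

lemma card_Gamma_idem: "card (Gamma Q e) = min_rank Q M"
  using rel_rank_idempotent[OF finite_Q idem_subset idem] min_rank_elems_rank[OF e] by simp

lemmas idem_scc_factorization = e Gamma_finite[OF idem_subset idem_trans finite_Q]
  eq_imp_le[OF card_Gamma_idem] scc_left_subset[OF idem_subset] scc_right_subset[OF idem_subset]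
  idem_factorization

lemma Hclass_iff: "m \<in> Hclass M e \<longleftrightarrow> m \<in> M \<and> e O m = m \<and> m O e = m \<and> m \<noteq> {}"
proof
  assume "m \<in> Hclass M e"
  then obtain x y x' y' where h: "m \<in> M" "m = e O x" "e = m O y" "m = x' O e" "e = y' O m"
    unfolding Hclass_def greenR_def greenL_def by blast
  have "e O m = m" using h(2) idem by (simp flip: O_assoc)
  moreover have "m O e = m" using h(4) idem by (simp add: O_assoc)
  moreover have "m \<noteq> {}" using h(3) min_rank_elems_nonempty[OF e] by auto
  ultimately show "m \<in> M \<and> e O m = m \<and> m O e = m \<and> m \<noteq> {}" using h by blast
next
  assume h: "m \<in> M \<and> e O m = m \<and> m O e = m \<and> m \<noteq> {}"
  then have "e O m O e \<noteq> {}" by simp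
  then obtain y where y: "y \<in> M" "e O m O e O y O e = e" "e O y O e O m O e = e"
    using min_rank_sandwich_inverse[OF e] h by blast
  have "e = m O (y O e)" using y(2) h by (simp flip: O_assoc)
  moreover have "y O e \<in> M" using y idem_in_M relcomp_in_M by auto
  moreover have "m = e O m" "m \<in> M" using h by simp_all
  ultimately have "greenR M m e" unfolding greenR_def by blast
  have "e = (e O y O e) O m" using y(3) h by (simp add: O_assoc)
  moreover have "e O y O e \<in> M" using y idem_in_M relcomp_in_M by auto
  moreover have "m = m O e" "m \<in> M" using h by simp_all
  ultimately have "greenL M m e" unfolding greenL_def by blast
  then show "m \<in> Hclass M e" unfolding Hclass_def using h \<open>greenR M m e\<close> by blast
qed

lemma idem_in_Hclass: "e \<in> Hclass M e"
  using Hclass_iff idem_in_M idem min_rank_elems_nonempty[OF e] by simp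

lemma Hclass_left_unit: "m \<in> Hclass M e \<Longrightarrow> e O m = m"
  using Hclass_iff by auto

lemma Hclass_right_unit: "m \<in> Hclass M e \<Longrightarrow> m O e = m"
  using Hclass_iff by auto

lemma Hclass_inverse_ex:
  assumes m: "m \<in> Hclass M e"
  shows "\<exists>n\<in>Hclass M e. m O n = e \<and> n O m = e"
proof -
  have h: "m \<in> M" "e O m = m" "m O e = m" "m \<noteq> {}" using m Hclass_iff by auto
  then have "e O m O e \<noteq> {}" by simp
  then obtain y where y: "y \<in> M" "e O m O e O y O e = e" "e O y O e O m O e = e"
    using min_rank_sandwich_inverse[OF e] h by blast
  define n where "n = e O y O e"
  have mn: "m O n = e" using y(2) h unfolding n_def by (simp flip: O_assoc)
  have nm: "n O m = e" using y(3) h unfolding n_def by (simp add: O_assoc)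
  have "n \<in> M" unfolding n_def using y idem_in_M relcomp_in_M by simp
  moreover have "e O n = n" unfolding n_def using idem by (simp flip: O_assoc)
  moreover have "n O e = n" unfolding n_def using idem by (simp add: O_assoc)
  moreover have "n \<noteq> {}" using mn min_rank_elems_nonempty[OF e] by auto
  ultimately have "n \<in> Hclass M e" using Hclass_iff by simp
  then show ?thesis using mn nm by blast
qed

lemma
  assumes m: "m \<in> Hclass M e"
  shows hinv_in_Hclass: "hinv M e m \<in> Hclass M e"
    and relcomp_hinv: "m O hinv M e m = e"
    and hinv_relcomp: "hinv M e m O m = e"
proof -
  obtain n where n: "n \<in> Hclass M e" "m O n = e" "n O m = e" using Hclass_inverse_ex[OF m] by blast
  have "n' = n" if "n' \<in> Hclass M e" "n' O m = e" for n'
  proof -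
    have "n' = n' O (m O n)" using that(1) n(2) Hclass_right_unit by simp
    also have "\<dots> = n" using that(2) Hclass_left_unit[OF n(1)] by (simp flip: O_assoc)
    finally show ?thesis .
  qed
  then have "hinv M e m = n" unfolding hinv_def using n by (intro the_equality) blast+
  then show "hinv M e m \<in> Hclass M e" "m O hinv M e m = e" "hinv M e m O m = e" using n by auto
qed

lemma Hclass_relcomp:
  assumes m: "m \<in> Hclass M e" and n: "n \<in> Hclass M e"
  shows "m O n \<in> Hclass M e"
proof -
  have "(m O n) O (hinv M e n O hinv M e m) = m O (n O hinv M e n) O hinv M e m"
    by (simp add: O_assoc)
  also have "\<dots> = e"
    using relcomp_hinv[OF n] Hclass_left_unit[OF hinv_in_Hclass[OF m]] relcomp_hinv[OF m]
    by simp
  finally have "m O n \<noteq> {}" using min_rank_elems_nonempty[OF e] by auto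
  moreover have "e O (m O n) = m O n" using Hclass_left_unit[OF m] by (simp flip: O_assoc)
  moreover have "(m O n) O e = m O n" using Hclass_right_unit[OF n] by (simp add: O_assoc)
  ultimately show ?thesis using m n Hclass_iff relcomp_in_M by auto
qed

lemma finite_Hclass: "finite (Hclass M e)"
  using finite_M unfolding Hclass_def by simp

lemma scc_action_subset: "scc_action Q e x \<subseteq> Gamma Q e \<times> Gamma Q e"
  unfolding scc_action_def using scc_left_subset[OF idem_subset] scc_right_subset[OF idem_subset]
  by blast

lemma scc_action_in_sandwiches: "x \<in> M \<Longrightarrow> scc_action Q e x \<in> sandwiches M (scc_left Q e) (scc_right Q e)"
  unfolding scc_action_def sandwiches_def by blast

lemma scc_action_iff:
  assumes m: "e O m O e = m" and \<rho>: "\<rho> \<in> Gamma Q e" "f \<in> \<rho>" and \<sigma>: "\<sigma> \<in> Gamma Q e" "g \<in> \<sigma>"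
  shows "(\<rho>, \<sigma>) \<in> scc_action Q e m \<longleftrightarrow> (f, g) \<in> m"
proof -
  have "(\<rho>, \<sigma>) \<in> scc_action Q e m \<longleftrightarrow> (\<exists>q p. (\<rho>, q) \<in> scc_right Q e \<and> (q, p) \<in> m \<and> (p, \<sigma>) \<in> scc_left Q e)"
    unfolding scc_action_def by blast
  also have "\<dots> \<longleftrightarrow> (\<exists>q p. (f, q) \<in> e \<and> (q, p) \<in> m \<and> (p, g) \<in> e)"
    using scc_right_iff[OF idem_subset idem_trans \<rho>] scc_left_iff[OF idem_subset idem_trans \<sigma>] by simp
  also have "\<dots> \<longleftrightarrow> (f, g) \<in> e O m O e" by blast
  finally show ?thesis using m by simp
qed

lemma scc_left_scc_action_scc_right: "scc_left Q e O scc_action Q e x O scc_right Q e = e O x O e"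
proof -
  have "e O x O e = (scc_left Q e O scc_right Q e) O x O (scc_left Q e O scc_right Q e)"
    using idem_factorization by (rule arg_cong[where f = "\<lambda>Z. Z O x O Z"])
  then show ?thesis unfolding scc_action_def by (simp add: O_assoc)
qed

lemma scc_action_relcomp:
  assumes "m O e = m"
  shows "scc_action Q e (m O n) = scc_action Q e m O scc_action Q e n"
proof -
  have "m O n = (m O (scc_left Q e O scc_right Q e)) O n"
    using assms idem_factorization by simp
  then show ?thesis unfolding scc_action_def by (simp add: O_assoc)
qed

lemma scc_action_idem: "scc_action Q e e = Id_on (Gamma Q e)"
proof (rule sandwich_idempotent_eq_Id[OF idem_scc_factorization])
  show "scc_action Q e e \<in> sandwiches M (scc_left Q e) (scc_right Q e)"
    using scc_action_in_sandwiches idem_in_M by simp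
  show "scc_action Q e e O scc_action Q e e = scc_action Q e e"
    using scc_action_relcomp[of e e] idem by simp
  show "scc_action Q e e \<noteq> {}"
    using scc_left_scc_action_scc_right[of e] idem min_rank_elems_nonempty[OF e] by auto
qed

lemma scc_right_O_scc_left: "scc_right Q e O scc_left Q e = Id_on (Gamma Q e)"
proof -
  have "scc_right Q e O scc_left Q e = scc_action Q e e"
  proof (rule set_eqI, rule iffI)
    fix z assume "z \<in> scc_right Q e O scc_left Q e"
    then obtain \<rho> q \<sigma> where z: "z = (\<rho>, \<sigma>)" "(\<rho>, q) \<in> scc_right Q e" "(q, \<sigma>) \<in> scc_left Q e"
      by blast
    then have \<rho>\<sigma>: "\<rho> \<in> Gamma Q e" "\<sigma> \<in> Gamma Q e" unfolding scc_left_def scc_right_def by auto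
    obtain f g where "f \<in> \<rho>" "g \<in> \<sigma>"
      using Gamma_nonempty[OF idem_subset idem_trans \<rho>\<sigma>(1)] Gamma_nonempty[OF idem_subset idem_trans \<rho>\<sigma>(2)]
      by blast
    moreover have "(f, q) \<in> e" "(q, g) \<in> e"
      using z(2,3) scc_right_iff[OF idem_subset idem_trans \<rho>\<sigma>(1) \<open>f \<in> \<rho>\<close>]
        scc_left_iff[OF idem_subset idem_trans \<rho>\<sigma>(2) \<open>g \<in> \<sigma>\<close>] by auto
    then have "(f, g) \<in> e" using idem by blast
    moreover have "e O e O e = e" using idem by (simp add: O_assoc)
    ultimately show "z \<in> scc_action Q e e" using scc_action_iff \<rho>\<sigma> z(1) by blast
  next
    fix z assume "z \<in> scc_action Q e e"
    then obtain \<rho> q p \<sigma> where z: "z = (\<rho>, \<sigma>)" "(\<rho>, q) \<in> scc_right Q e" "(q, p) \<in> e"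
        "(p, \<sigma>) \<in> scc_left Q e"
      unfolding scc_action_def by blast
    then have "(\<rho>, p) \<in> scc_right Q e" unfolding scc_right_def using idem_trans by blast
    then show "z \<in> scc_right Q e O scc_left Q e" using z by blast
  qed
  then show ?thesis using scc_action_idem by simp
qed

lemma scc_action_sandwich: "scc_action Q e (e O x O e) = scc_right Q e O x O scc_left Q e"
proof -
  let ?l = "scc_left Q e" and ?r = "scc_right Q e"
  have "e O x O e = (?l O ?r) O x O (?l O ?r)"
    using idem_factorization by (rule arg_cong[where f = "\<lambda>Z. Z O x O Z"])
  then have "scc_action Q e (e O x O e) = (?r O ?l) O (?r O x O ?l) O (?r O ?l)"
    unfolding scc_action_def by (simp add: O_assoc)
  also have "\<dots> = ?r O x O ?l"
    unfolding scc_right_O_scc_left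
    using scc_left_subset[OF idem_subset] scc_right_subset[OF idem_subset] by auto
  finally show ?thesis .
qed

lemma Hclass_sandwich_eq: "m \<in> Hclass M e \<Longrightarrow> e O m O e = m"
  using Hclass_left_unit Hclass_right_unit by simp

lemma scc_action_hinv_inverse:
  assumes m: "m \<in> Hclass M e"
  shows "scc_action Q e m O scc_action Q e (hinv M e m) = Id_on (Gamma Q e)"
    and "scc_action Q e (hinv M e m) O scc_action Q e m = Id_on (Gamma Q e)"
  using scc_action_relcomp[OF Hclass_right_unit[OF m], of "hinv M e m"]
    scc_action_relcomp[OF Hclass_right_unit[OF hinv_in_Hclass[OF m]], of m]
    relcomp_hinv[OF m] hinv_relcomp[OF m] scc_action_idem
  by simp_all

lemma scc_action_hinv: "m \<in> Hclass M e \<Longrightarrow> scc_action Q e (hinv M e m) = converse (scc_action Q e m)"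
  using inverse_pair_eq_converse[OF scc_action_subset scc_action_subset scc_action_hinv_inverse] .

lemma scc_action_perm_rel: "m \<in> Hclass M e \<Longrightarrow> perm_rel (Gamma Q e) (scc_action Q e m)"
  using inverse_pair_perm_rel[OF scc_action_subset scc_action_subset scc_action_hinv_inverse] .

lemma gamma_eq_scc_action:
  assumes m: "m \<in> Hclass M e"
  shows "gamma Q M e m = scc_action Q e m"
proof (rule set_eqI)
  fix z :: "'a set \<times> 'a set"
  obtain \<rho> \<sigma> where z: "z = (\<rho>, \<sigma>)" by (cases z)
  have mi: "hinv M e m \<in> Hclass M e" using hinv_in_Hclass[OF m] .
  show "z \<in> gamma Q M e m \<longleftrightarrow> z \<in> scc_action Q e m"
  proof
    assume "z \<in> gamma Q M e m"
    then obtain r s where "\<rho> \<in> Gamma Q e" "\<sigma> \<in> Gamma Q e" "r \<in> \<rho>" "s \<in> \<sigma>" "(r, s) \<in> m"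
      unfolding gamma_def z by blast
    then show "z \<in> scc_action Q e m" using scc_action_iff[OF Hclass_sandwich_eq[OF m]] z by blast
  next
    assume zm: "z \<in> scc_action Q e m"
    then have \<rho>\<sigma>: "\<rho> \<in> Gamma Q e" "\<sigma> \<in> Gamma Q e" using scc_action_subset z by auto
    obtain r s where rs: "r \<in> \<rho>" "s \<in> \<sigma>"
      using Gamma_nonempty[OF idem_subset idem_trans \<rho>\<sigma>(1)] Gamma_nonempty[OF idem_subset idem_trans \<rho>\<sigma>(2)]
      by blast
    have "(r, s) \<in> m" using scc_action_iff[OF Hclass_sandwich_eq[OF m] \<rho>\<sigma>(1) rs(1) \<rho>\<sigma>(2) rs(2)] zm z by simp
    moreover have "(\<sigma>, \<rho>) \<in> scc_action Q e (hinv M e m)" using scc_action_hinv[OF m] zm z by simp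
    then have "(s, r) \<in> hinv M e m"
      using scc_action_iff[OF Hclass_sandwich_eq[OF mi] \<rho>\<sigma>(2) rs(2) \<rho>\<sigma>(1) rs(1)] by simp
    ultimately show "z \<in> gamma Q M e m" unfolding gamma_def z using \<rho>\<sigma> rs by blast
  qed
qed

lemma Ggrp_eq_scc_action_image: "Ggrp Q M e = scc_action Q e ` Hclass M e"
  unfolding Ggrp_def using gamma_eq_scc_action by (auto simp: image_def)

lemma Hclass_scc_action_transitive:
  assumes "\<rho> \<in> Gamma Q e" "\<sigma> \<in> Gamma Q e"
  shows "\<exists>m\<in>Hclass M e. (\<rho>, \<sigma>) \<in> scc_action Q e m"
proof -
  obtain B where B: "B \<in> sandwiches M (scc_left Q e) (scc_right Q e)" "(\<rho>, \<sigma>) \<in> B"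
    using sandwich_transitive[OF idem_scc_factorization] assms by blast
  then obtain x where x: "x \<in> M" "B = scc_right Q e O x O scc_left Q e"
    unfolding sandwiches_def by blast
  have "e O x O e \<in> M" using x idem_in_M relcomp_in_M by simp
  moreover have "e O (e O x O e) = e O x O e" "(e O x O e) O e = e O x O e"
    using idem by (simp_all flip: O_assoc) (simp add: O_assoc)
  moreover have "e O x O e \<noteq> {}" using B(2) x(2) scc_action_sandwich[of x] unfolding scc_action_def by auto
  ultimately have "e O x O e \<in> Hclass M e" using Hclass_iff by simp
  then show ?thesis using B x scc_action_sandwich by metis
qed

lemma transitive_perm_group_Ggrp: "transitive_perm_group (Gamma Q e) (Ggrp Q M e)"
  unfolding transitive_perm_group_def perm_group_rel_def Ggrp_eq_scc_action_image
proof (intro conjI ballI)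
  show "scc_action Q e ` Hclass M e \<noteq> {}" using idem_in_Hclass by blast
  show "perm_rel (Gamma Q e) g" if "g \<in> scc_action Q e ` Hclass M e" for g
    using that scc_action_perm_rel by blast
  show "g O h \<in> scc_action Q e ` Hclass M e"
    if gh: "g \<in> scc_action Q e ` Hclass M e" "h \<in> scc_action Q e ` Hclass M e" for g h
  proof -
    obtain m n where "m \<in> Hclass M e" "n \<in> Hclass M e" "g = scc_action Q e m" "h = scc_action Q e n"
      using gh by blast
    then show ?thesis using scc_action_relcomp[OF Hclass_right_unit] Hclass_relcomp by (metis imageI)
  qed
  show "converse g \<in> scc_action Q e ` Hclass M e" if "g \<in> scc_action Q e ` Hclass M e" for g
    using that scc_action_hinv hinv_in_Hclass by (auto simp: image_def)
  show "\<exists>g\<in>scc_action Q e ` Hclass M e. (s, t) \<in> g" if "s \<in> Gamma Q e" "t \<in> Gamma Q e" for s t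
    using Hclass_scc_action_transitive[OF that] by blast
qed

context
  fixes i assumes i: "(i, i) \<in> e"
begin

definition stabilizer :: "('a \<times> 'a) set set" where
  "stabilizer = {m \<in> Hclass M e. (i, i) \<in> m}"

definition orbit_map :: "('a \<times> 'a) set \<Rightarrow> 'a set" where
  "orbit_map m = (THE \<sigma>. (scc_of e i, \<sigma>) \<in> scc_action Q e m)"

lemma scc_of_i: "scc_of e i \<in> Gamma Q e" "i \<in> scc_of e i"
  using scc_of_in_Gamma[OF idem_subset idem_trans i] scc_of_self[OF i] .

lemma stabilizer_iff: "m \<in> Hclass M e \<Longrightarrow> m \<in> stabilizer \<longleftrightarrow> (scc_of e i, scc_of e i) \<in> scc_action Q e m"
  unfolding stabilizer_def
  using scc_action_iff[OF Hclass_sandwich_eq scc_of_i scc_of_i] by simp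

lemma orbit_map_iff:
  assumes m: "m \<in> Hclass M e"
  shows "(scc_of e i, \<sigma>) \<in> scc_action Q e m \<longleftrightarrow> \<sigma> = orbit_map m"
proof -
  have "\<forall>\<rho>\<in>Gamma Q e. \<exists>!\<sigma>. (\<rho>, \<sigma>) \<in> scc_action Q e m"
    using scc_action_perm_rel[OF m] unfolding perm_rel_def by (elim conjE)
  then have unique: "\<exists>!\<sigma>. (scc_of e i, \<sigma>) \<in> scc_action Q e m" using scc_of_i(1) by (rule bspec)
  show ?thesis
    unfolding orbit_map_def using the1_equality[OF unique] theI'[OF unique] by blast
qed

lemma orbit_map_image: "orbit_map ` Hclass M e = Gamma Q e"
proof
  show "orbit_map ` Hclass M e \<subseteq> Gamma Q e"
  proof
    fix \<sigma> assume "\<sigma> \<in> orbit_map ` Hclass M e"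
    then obtain m where "m \<in> Hclass M e" "\<sigma> = orbit_map m" by blast
    then have "(scc_of e i, \<sigma>) \<in> scc_action Q e m" using orbit_map_iff by simp
    then show "\<sigma> \<in> Gamma Q e" using scc_action_subset by blast
  qed
  show "Gamma Q e \<subseteq> orbit_map ` Hclass M e"
  proof
    fix \<sigma> assume "\<sigma> \<in> Gamma Q e"
    then obtain m where "m \<in> Hclass M e" "(scc_of e i, \<sigma>) \<in> scc_action Q e m"
      using Hclass_scc_action_transitive[OF scc_of_i(1)] by blast
    then show "\<sigma> \<in> orbit_map ` Hclass M e" using orbit_map_iff by blast
  qed
qed

lemma right_coset_subset:
  assumes m: "m \<in> Hclass M e" and m': "m' \<in> Hclass M e" and eq: "orbit_map m = orbit_map m'"
  shows "(\<lambda>s. s O m) ` stabilizer \<subseteq> (\<lambda>s. s O m') ` stabilizer"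
proof
  fix x assume "x \<in> (\<lambda>s. s O m) ` stabilizer"
  then obtain s where s: "s \<in> stabilizer" "x = s O m" by blast
  have sH: "s \<in> Hclass M e" using s unfolding stabilizer_def by simp
  define t where "t = s O m O hinv M e m'"
  have tH: "t \<in> Hclass M e" unfolding t_def using Hclass_relcomp sH m hinv_in_Hclass[OF m'] by simp
  have "(scc_of e i, scc_of e i) \<in> scc_action Q e s" using stabilizer_iff sH s by simp
  moreover have "(scc_of e i, orbit_map m) \<in> scc_action Q e m" using orbit_map_iff[OF m] by simp
  moreover have "(orbit_map m, scc_of e i) \<in> scc_action Q e (hinv M e m')"
    using scc_action_hinv[OF m'] orbit_map_iff[OF m'] eq by simp
  moreover have "scc_action Q e t = scc_action Q e s O scc_action Q e m O scc_action Q e (hinv M e m')"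
    unfolding t_def using scc_action_relcomp Hclass_right_unit sH m by simp
  ultimately have "(scc_of e i, scc_of e i) \<in> scc_action Q e t" by blast
  then have "t \<in> stabilizer" using stabilizer_iff tH by simp
  moreover have "t O m' = s O m"
    unfolding t_def using hinv_relcomp[OF m'] Hclass_right_unit[OF m] by (simp add: O_assoc)
  ultimately show "x \<in> (\<lambda>s. s O m') ` stabilizer" using s by blast
qed

lemma right_coset_eq_iff:
  assumes m: "m \<in> Hclass M e" and m': "m' \<in> Hclass M e"
  shows "(\<lambda>s. s O m) ` stabilizer = (\<lambda>s. s O m') ` stabilizer \<longleftrightarrow> orbit_map m = orbit_map m'"
proof
  assume eq: "(\<lambda>s. s O m) ` stabilizer = (\<lambda>s. s O m') ` stabilizer"
  have "e \<in> stabilizer" unfolding stabilizer_def using idem_in_Hclass i by simp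
  then have "m' \<in> (\<lambda>s. s O m) ` stabilizer" using eq Hclass_left_unit[OF m'] by (metis image_eqI)
  then obtain s where s: "s \<in> stabilizer" "m' = s O m" by blast
  have sH: "s \<in> Hclass M e" using s unfolding stabilizer_def by simp
  have "(scc_of e i, scc_of e i) \<in> scc_action Q e s" using stabilizer_iff sH s by simp
  moreover have "(scc_of e i, orbit_map m) \<in> scc_action Q e m" using orbit_map_iff[OF m] by simp
  moreover have "scc_action Q e m' = scc_action Q e s O scc_action Q e m"
    using s(2) scc_action_relcomp[OF Hclass_right_unit[OF sH]] by simp
  ultimately have "(scc_of e i, orbit_map m) \<in> scc_action Q e m'" by blast
  then show "orbit_map m = orbit_map m'" using orbit_map_iff[OF m'] by simp
next
  assume "orbit_map m = orbit_map m'"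
  then show "(\<lambda>s. s O m) ` stabilizer = (\<lambda>s. s O m') ` stabilizer"
    using right_coset_subset[OF m m'] right_coset_subset[OF m' m] by (intro subset_antisym) simp_all
qed

lemma min_rank_eq_index: "min_rank Q M = grp_index (Hclass M e) {m \<in> Hclass M e. (i, i) \<in> m}"
proof -
  have "grp_index (Hclass M e) stabilizer = card (orbit_map ` Hclass M e)"
    unfolding grp_index_def by (rule card_image_eq_of_same_kernel[OF finite_Hclass right_coset_eq_iff])
  then show ?thesis unfolding orbit_map_image card_Gamma_idem stabilizer_def by simp
qed

end

end

lemma Hclass_idempotent_eq:
  assumes e: "e \<in> min_rank_elems" "e O e = e" and v: "v \<in> Hclass M e" "v O v = v"
  shows "v = e"
proof -
  have "v = v O (v O hinv M e v)" using Hclass_right_unit[OF e v(1)] relcomp_hinv[OF e v(1)] by simp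
  also have "\<dots> = (v O v) O hinv M e v" by (simp add: O_assoc)
  also have "\<dots> = e" using v(2) relcomp_hinv[OF e v(1)] by simp
  finally show ?thesis .
qed

lemma connecting_pair:
  assumes e: "e \<in> min_rank_elems" "e O e = e" and f: "f \<in> min_rank_elems" "f O f = f"
  obtains x y where "x \<in> M" "y \<in> M" "e O x = x" "x O f = x" "f O y = y" "y O e = y"
    "x O y \<in> Hclass M e"
proof -
  obtain h g where h: "(h, h) \<in> e" and g: "(g, g) \<in> f"
    using idem_fixpoint_ex[OF e] idem_fixpoint_ex[OF f] by blast
  have "h \<in> Q" "g \<in> Q" using h g idem_subset[OF e] idem_subset[OF f] by auto
  then obtain b b' where b: "b \<in> M" "(h, g) \<in> b" and b': "b' \<in> M" "(g, h) \<in> b'"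
    by (meson transitiveE)
  define x where "x = e O b O f"
  define y where "y = f O b' O e"
  have xy: "x \<in> M" "y \<in> M"
    unfolding x_def y_def using e f idem_in_M b b' relcomp_in_M by simp_all
  have "e O x = x" "x O f = x" "f O y = y" "y O e = y"
    unfolding x_def y_def using e(2) f(2) by (simp_all flip: O_assoc) (simp_all add: O_assoc)
  moreover have "x O y \<in> Hclass M e"
  proof -
    have "(h, h) \<in> x O y" unfolding x_def y_def using h g b b' by blast
    moreover have "e O (x O y) = x O y" "(x O y) O e = x O y"
      unfolding x_def y_def using e(2) by (simp_all flip: O_assoc) (simp add: O_assoc)
    ultimately show ?thesis using Hclass_iff[OF e] xy relcomp_in_M by auto
  qed
  ultimately show ?thesis using that xy by blast
qed

lemma conjugating_pair:
  assumes e: "e \<in> min_rank_elems" "e O e = e" and f: "f \<in> min_rank_elems" "f O f = f"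
  shows "\<exists>x y. x \<in> M \<and> y \<in> M \<and> e O x = x \<and> x O f = x \<and> f O y = y \<and> y O e = y \<and>
    x O y = e \<and> y O x = f"
proof -
  obtain x y' where x: "x \<in> M" "e O x = x" "x O f = x" and y': "y' \<in> M" "f O y' = y'" "y' O e = y'"
    and u: "x O y' \<in> Hclass M e"
    by (rule connecting_pair[OF e f])
  define y where "y = y' O hinv M e (x O y')"
  have yM: "y \<in> M" unfolding y_def using y'(1) hinv_in_Hclass[OF e u] relcomp_in_M
    unfolding Hclass_def by blast
  have fy: "f O y = y" unfolding y_def using y'(2) by (simp flip: O_assoc)
  have ye: "y O e = y"
    unfolding y_def using Hclass_right_unit[OF e hinv_in_Hclass[OF e u]] by (simp add: O_assoc)
  have xy: "x O y = e" unfolding y_def using relcomp_hinv[OF e u] by (simp add: O_assoc)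
  have "y O x \<in> Hclass M f"
  proof -
    have "x O (y O x) O y = (x O y) O (x O y)" by (simp add: O_assoc)
    then have "x O (y O x) O y = e" using xy e(2) by simp
    then have "y O x \<noteq> {}" using min_rank_elems_nonempty[OF e(1)] by auto
    moreover have "f O (y O x) = y O x" "(y O x) O f = y O x" using fy x(3)
      by (simp_all flip: O_assoc) (simp add: O_assoc)
    ultimately show ?thesis using Hclass_iff[OF f] x(1) yM relcomp_in_M by auto
  qed
  moreover have "(y O x) O (y O x) = y O x"
    using xy ye by (simp add: O_assoc) (simp flip: O_assoc)
  ultimately have "y O x = f" using Hclass_idempotent_eq[OF f] by blast
  then show ?thesis using x yM fy ye xy by blast
qed

context
  fixes e f x y
  assumes e: "e \<in> min_rank_elems" "e O e = e" and f: "f \<in> min_rank_elems" "f O f = f"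
    and x: "x \<in> M" "e O x = x" "x O f = x" and y: "y \<in> M" "f O y = y" "y O e = y"
    and xy: "x O y = e" and yx: "y O x = f"
begin

definition transfer :: "('a set \<times> 'a set) set" where
  "transfer = scc_right Q e O x O scc_left Q f"

definition transfer_back :: "('a set \<times> 'a set) set" where
  "transfer_back = scc_right Q f O y O scc_left Q e"

lemma transfer_subset: "transfer \<subseteq> Gamma Q e \<times> Gamma Q f"
  unfolding transfer_def
  using scc_right_subset[OF idem_subset[OF e]] scc_left_subset[OF idem_subset[OF f]] by blast

lemma transfer_back_subset: "transfer_back \<subseteq> Gamma Q f \<times> Gamma Q e"
  unfolding transfer_back_def
  using scc_right_subset[OF idem_subset[OF f]] scc_left_subset[OF idem_subset[OF e]] by blast

lemma transfer_transfer_back: "transfer O transfer_back = Id_on (Gamma Q e)"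
proof -
  have "transfer O transfer_back = scc_right Q e O x O (scc_left Q f O scc_right Q f) O y O scc_left Q e"
    unfolding transfer_def transfer_back_def by (simp add: O_assoc)
  also have "\<dots> = scc_right Q e O x O f O y O scc_left Q e"
    by (simp flip: idem_factorization[OF f])
  also have "\<dots> = scc_action Q e (x O f O y)" by (simp add: scc_action_def O_assoc)
  also have "\<dots> = Id_on (Gamma Q e)" using y(2) xy scc_action_idem[OF e] by simp
  finally show ?thesis .
qed

lemma transfer_back_transfer: "transfer_back O transfer = Id_on (Gamma Q f)"
proof -
  have "transfer_back O transfer = scc_right Q f O y O (scc_left Q e O scc_right Q e) O x O scc_left Q f"
    unfolding transfer_def transfer_back_def by (simp add: O_assoc)
  also have "\<dots> = scc_right Q f O y O e O x O scc_left Q f"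
    by (simp flip: idem_factorization[OF e])
  also have "\<dots> = scc_action Q f (y O e O x)" by (simp add: scc_action_def O_assoc)
  also have "\<dots> = Id_on (Gamma Q f)" using x(2) yx scc_action_idem[OF f] by simp
  finally show ?thesis .
qed

lemmas transfer_pair = transfer_subset transfer_back_subset transfer_transfer_back transfer_back_transfer

lemma conj_Hclass: "m \<in> Hclass M e \<Longrightarrow> y O m O x \<in> Hclass M f"
proof -
  assume m: "m \<in> Hclass M e"
  have "x O (y O m O x) O y = (x O y) O m O (x O y)" by (simp add: O_assoc)
  also have "\<dots> = m" using xy Hclass_sandwich_eq[OF e m] by simp
  finally have "y O m O x \<noteq> {}" using m Hclass_iff[OF e] by auto
  moreover have "f O (y O m O x) = y O m O x" using y(2) by (simp flip: O_assoc)
  moreover have "(y O m O x) O f = y O m O x" using x(3) by (simp add: O_assoc)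
  moreover have "y O m O x \<in> M" using x y m relcomp_in_M unfolding Hclass_def by simp
  ultimately show ?thesis using Hclass_iff[OF f] by simp
qed

lemma conj_Hclass_back: "n \<in> Hclass M f \<Longrightarrow> x O n O y \<in> Hclass M e \<and> y O (x O n O y) O x = n"
proof -
  assume n: "n \<in> Hclass M f"
  have "y O (x O n O y) O x = (y O x) O n O (y O x)" by (simp add: O_assoc)
  also have "\<dots> = n" using yx Hclass_sandwich_eq[OF f n] by simp
  finally have conj_inv: "y O (x O n O y) O x = n" .
  then have "x O n O y \<noteq> {}" using n Hclass_iff[OF f] by auto
  moreover have "e O (x O n O y) = x O n O y" using x(2) by (simp flip: O_assoc)
  moreover have "(x O n O y) O e = x O n O y" using y(3) by (simp add: O_assoc)
  moreover have "x O n O y \<in> M" using x y n relcomp_in_M unfolding Hclass_def by simp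
  ultimately show ?thesis using Hclass_iff[OF e] conj_inv by simp
qed

lemma transfer_scc_action:
  assumes m: "m \<in> Hclass M e"
  shows "transfer_back O scc_action Q e m O transfer = scc_action Q f (y O m O x)"
proof -
  have "transfer_back O scc_action Q e m O transfer
      = scc_right Q f O y O (scc_left Q e O scc_action Q e m O scc_right Q e) O x O scc_left Q f"
    unfolding transfer_def transfer_back_def scc_action_def by (simp add: O_assoc)
  also have "\<dots> = scc_right Q f O y O m O x O scc_left Q f"
    using scc_left_scc_action_scc_right[OF e, of m] Hclass_sandwich_eq[OF e m] by simp
  finally show ?thesis unfolding scc_action_def by (simp add: O_assoc)
qed

definition transfer_fun :: "'a set \<Rightarrow> 'a set" where
  "transfer_fun \<rho> = (THE \<sigma>. (\<rho>, \<sigma>) \<in> transfer)"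

lemma transfer_fun_bij: "bij_betw transfer_fun (Gamma Q e) (Gamma Q f)"
  unfolding transfer_fun_def[abs_def] by (rule inverse_pair_bij_betw[OF transfer_pair])

lemma transfer_iff: "\<rho> \<in> Gamma Q e \<Longrightarrow> (\<rho>, \<sigma>) \<in> transfer \<longleftrightarrow> \<sigma> = transfer_fun \<rho>"
  unfolding transfer_fun_def by (rule inverse_pair_graph_iff[OF transfer_pair])

lemma transfer_back_iff: "(\<sigma>, \<rho>) \<in> transfer_back \<longleftrightarrow> (\<rho>, \<sigma>) \<in> transfer"
  using inverse_pair_eq_converse[OF transfer_pair] by auto

abbreviation conj_perm :: "('a set \<times> 'a set) set \<Rightarrow> ('a set \<times> 'a set) set" where
  "conj_perm g \<equiv> transfer_back O g O transfer"

lemma Ggrp_subset: "g \<in> Ggrp Q M e \<Longrightarrow> g \<subseteq> Gamma Q e \<times> Gamma Q e"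
  using scc_action_subset[OF e] unfolding Ggrp_eq_scc_action_image[OF e] by blast

lemma conj_perm_cancel: "g \<subseteq> Gamma Q e \<times> Gamma Q e \<Longrightarrow> transfer O conj_perm g O transfer_back = g"
proof -
  assume "g \<subseteq> Gamma Q e \<times> Gamma Q e"
  moreover have "transfer O conj_perm g O transfer_back = (transfer O transfer_back) O g O (transfer O transfer_back)"
    by (simp add: O_assoc)
  ultimately show ?thesis unfolding transfer_transfer_back by auto
qed

lemma conj_perm_bij: "bij_betw conj_perm (Ggrp Q M e) (Ggrp Q M f)"
proof (rule bij_betw_imageI)
  show "inj_on conj_perm (Ggrp Q M e)"
    by (rule inj_on_inverseI[where g = "\<lambda>h. transfer O h O transfer_back"])
      (simp add: conj_perm_cancel Ggrp_subset)
  show "conj_perm ` Ggrp Q M e = Ggrp Q M f"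
    unfolding Ggrp_eq_scc_action_image[OF e] Ggrp_eq_scc_action_image[OF f]
  proof
    show "conj_perm ` scc_action Q e ` Hclass M e \<subseteq> scc_action Q f ` Hclass M f"
      using transfer_scc_action conj_Hclass by auto
    show "scc_action Q f ` Hclass M f \<subseteq> conj_perm ` scc_action Q e ` Hclass M e"
    proof
      fix h assume "h \<in> scc_action Q f ` Hclass M f"
      then obtain n where n: "n \<in> Hclass M f" "h = scc_action Q f n" by blast
      then have "conj_perm (scc_action Q e (x O n O y)) = h"
        using transfer_scc_action conj_Hclass_back by simp
      then show "h \<in> conj_perm ` scc_action Q e ` Hclass M e"
        using conj_Hclass_back[OF n(1)] by blast
    qed
  qed
qed

lemma conj_perm_relcomp:
  assumes "g \<in> Ggrp Q M e"
  shows "conj_perm (g O h) = conj_perm g O conj_perm h"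
proof -
  have g_Id: "g O Id_on (Gamma Q e) = g" using Ggrp_subset[OF assms] by auto
  have "conj_perm g O conj_perm h = transfer_back O (g O (transfer O transfer_back)) O h O transfer"
    by (simp add: O_assoc)
  then show ?thesis unfolding transfer_transfer_back g_Id by (simp add: O_assoc)
qed

lemma conj_perm_iff:
  assumes g: "g \<in> Ggrp Q M e" and s: "s \<in> Gamma Q e" and t: "t \<in> Gamma Q e"
  shows "(s, t) \<in> g \<longleftrightarrow> (transfer_fun s, transfer_fun t) \<in> conj_perm g"
proof -
  have inj: "inj_on transfer_fun (Gamma Q e)" using transfer_fun_bij by (rule bij_betw_imp_inj_on)
  show ?thesis
  proof
    assume "(s, t) \<in> g"
    moreover have "(transfer_fun s, s) \<in> transfer_back" using transfer_iff[OF s] transfer_back_iff by simp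
    moreover have "(t, transfer_fun t) \<in> transfer" using transfer_iff[OF t] by simp
    ultimately show "(transfer_fun s, transfer_fun t) \<in> conj_perm g" by blast
  next
    assume "(transfer_fun s, transfer_fun t) \<in> conj_perm g"
    then obtain a b where ab: "(transfer_fun s, a) \<in> transfer_back" "(a, b) \<in> g"
        "(b, transfer_fun t) \<in> transfer"
      by blast
    have "a \<in> Gamma Q e" "b \<in> Gamma Q e" using ab(2) Ggrp_subset[OF g] by auto
    then have "transfer_fun a = transfer_fun s" "transfer_fun b = transfer_fun t"
      using ab(1,3) transfer_iff transfer_back_iff by simp_all
    then have "a = s" "b = t" using inj \<open>a \<in> Gamma Q e\<close> \<open>b \<in> Gamma Q e\<close> s t by (auto dest: inj_onD)
    then show "(s, t) \<in> g" using ab(2) by simp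
  qed
qed

lemma equivalent_perm_groups_Ggrp:
  "equivalent_perm_groups (Gamma Q e) (Ggrp Q M e) (Gamma Q f) (Ggrp Q M f)"
  unfolding equivalent_perm_groups_def
proof (intro exI[of _ transfer_fun] exI[of _ conj_perm] conjI ballI)
qed (simp_all add: transfer_fun_bij conj_perm_bij conj_perm_relcomp conj_perm_iff)

end

lemma equivalent_perm_groups_min_rank_idempotents:
  assumes e: "e \<in> min_rank_elems" "e O e = e" and f: "f \<in> min_rank_elems" "f O f = f"
  shows "equivalent_perm_groups (Gamma Q e) (Ggrp Q M e) (Gamma Q f) (Ggrp Q M f)"
proof -
  obtain x y where "x \<in> M" "e O x = x" "x O f = x" "y \<in> M" "f O y = y" "y O e = y"
      "x O y = e" "y O x = f"
    using conjugating_pair[OF e f] by blast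
  then show ?thesis by (rule equivalent_perm_groups_Ggrp[OF e f])
qed

end

theorem mainTheorem10:
  fixes Q :: "'a set" and M :: "('a \<times> 'a) set set" and K :: "('a \<times> 'a) set set"
  assumes "finite Q" and "Q \<noteq> {}"
    and "rel_monoid Q M" and "transitive_rel_monoid Q M"
    and K_def: "K = {m \<in> M. rel_rank Q m = min_rank Q M}"
  shows "(\<exists>m\<in>M. K = Dclass M m) \<and> (\<exists>e\<in>K. idempotent e)
    \<and> (\<forall>e\<in>K. idempotent e \<longrightarrow> transitive_perm_group (Gamma Q e) (Ggrp Q M e))
    \<and> (\<forall>e\<in>K. \<forall>f\<in>K. idempotent e \<and> idempotent f \<longrightarrow>
          equivalent_perm_groups (Gamma Q e) (Ggrp Q M e) (Gamma Q f) (Ggrp Q M f))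
    \<and> (\<forall>e\<in>K. idempotent e \<longrightarrow> (\<forall>i\<in>Q. (i, i) \<in> e \<longrightarrow>
          min_rank Q M = grp_index (Hclass M e) {m \<in> Hclass M e. (i, i) \<in> m}))"
proof -
  interpret finite_transitive_rel_monoid Q M using assms(1-4) by unfold_locales
  have K: "K = min_rank_elems" unfolding K_def min_rank_elems_def ..
  obtain e where e: "e \<in> K" "e O e = e" using min_rank_idempotent_ex K by blast
  have "K = Dclass M e" using min_rank_elems_eq_Dclass e(1) K by simp
  moreover have "e \<in> M" using e K min_rank_elems_in_M by simp
  moreover have "transitive_perm_group (Gamma Q e) (Ggrp Q M e)" if "e \<in> K" "e O e = e" for e
    using transitive_perm_group_Ggrp that K by simp
  moreover have "equivalent_perm_groups (Gamma Q e) (Ggrp Q M e) (Gamma Q f) (Ggrp Q M f)"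
    if "e \<in> K" "e O e = e" "f \<in> K" "f O f = f" for e f
    using equivalent_perm_groups_min_rank_idempotents that K by simp
  moreover have "min_rank Q M = grp_index (Hclass M e) {m \<in> Hclass M e. (i, i) \<in> m}"
    if "e \<in> K" "e O e = e" "(i, i) \<in> e" for e i
    using min_rank_eq_index that K by simp
  ultimately show ?thesis unfolding idempotent_def using e by blast
qed

end
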